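(* Let $\mathcal M\subset \mathcal M_n(\mathbb R)$ be a compact convex set of irreducible Metzler matrices, and let $\lambda(\mathcal M)$ be the real number defined below. Let $v_0:K\to\mathbb R_+$ be a continuous function, homogeneous of degree 1, positive on $K_0$, and define $v(t,x)=\sup_{M\in L^\infty(0,t)} v_0(x_M(t))$. Then for every $x\in K_0$, \[ \lim_{t\to+\infty}\frac1t\log v(t,x)=\lambda(\mathcal M), \] and the convergence is locally uniform on $K_0$.
   Context: A real $n\times n$ matrix $m$ is Metzler if $m_{ij}\ge 0$ for all $i\neq j$; it is irreducible if for every partition $\{1,\dots,n\}=I\sqcup J$ into nonempty sets there exist $i\in I$, $j\in J$ with $m_{ij}>0$. $K$ is the nonnegative orthant of $\mathbb R^n$, $K_0=K\setminus\{0\}$. For $t>0$, $L^\infty(0,t)$ denotes the set of measurable controls $M:[0,t]\to\mathcal M$, and $x_M$ is the solution of $\dot x_M(s)=M(s)x_M(s)$, $x_M(0)=x$. $\lambda(\mathcal M)$ is the (unique) real number for which there exists a function $\overline v:K\to\mathbb R_+$, homogeneous of degree 1, positive on $K_0$ and globally Lipschitz, such that $e^{\lambda(\mathcal M)t}\overline v(x)=\sup_{M\in L^\infty(0,t)}\overline v(x_M(t))$ for all $t\ge0$, $x\in K$. *)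

theory Defs
  imports "HOL-Analysis.Analysis"
begin

text \<open>Dimension n is the cardinality of the finite index type 'n.
  Vectors are real^'n, matrices real^'n^'n (row i, column j: m$i$j).\<close>

definition orthant :: "(real^'n) set" where
  "orthant = {x. \<forall>i. 0 \<le> x $ i}"

definition orthant0 :: "(real^'n) set" where
  "orthant0 = orthant - {0}"

definition metzler :: "real^'n^'n \<Rightarrow> bool" where
  "metzler m \<longleftrightarrow> (\<forall>i j. i \<noteq> j \<longrightarrow> 0 \<le> m $ i $ j)"

definition irreducible_mat :: "real^'n^'n \<Rightarrow> bool" where
  "irreducible_mat m \<longleftrightarrow>
     (\<forall>I::'n set. I \<noteq> {} \<and> I \<noteq> UNIV \<longrightarrow> (\<exists>i\<in>I. \<exists>j\<in>-I. m $ i $ j > 0))"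

text \<open>Controls in L^\<infinity>(0,t) with values in \<M>: measurable maps [0,t] \<rightarrow> \<M>
  (essential boundedness is automatic since \<M> is compact).\<close>
definition admissible_control :: "(real^'n^'n) set \<Rightarrow> real \<Rightarrow> (real \<Rightarrow> real^'n^'n) \<Rightarrow> bool" where
  "admissible_control Ms t M \<longleftrightarrow>
     M \<in> borel_measurable (lebesgue_on {0..t}) \<and> (\<forall>s\<in>{0..t}. M s \<in> Ms)"

text \<open>(Caratheodory) solution of x' = M(s) x, x(0) = x on [0,t], in integral form.\<close>
definition is_trajectory :: "(real \<Rightarrow> real^'n^'n) \<Rightarrow> real^'n \<Rightarrow> real \<Rightarrow> (real \<Rightarrow> real^'n) \<Rightarrow> bool" where
  "is_trajectory M x t y \<longleftrightarrow> continuous_on {0..t} y \<and>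
     (\<forall>s\<in>{0..t}. (\<lambda>r. M r *v y r) integrable_on {0..s} \<and>
                  y s = x + integral {0..s} (\<lambda>r. M r *v y r))"

definition reachable :: "(real^'n^'n) set \<Rightarrow> real \<Rightarrow> real^'n \<Rightarrow> (real^'n) set" where
  "reachable Ms t x = {y t | M y. admissible_control Ms t M \<and> is_trajectory M x t y}"

definition value_fun :: "(real^'n \<Rightarrow> real) \<Rightarrow> (real^'n^'n) set \<Rightarrow> real \<Rightarrow> real^'n \<Rightarrow> real" where
  "value_fun w Ms t x = Sup (w ` reachable Ms t x)"

definition homogeneous1 :: "(real^'n \<Rightarrow> real) \<Rightarrow> bool" where
  "homogeneous1 w \<longleftrightarrow> (\<forall>x\<in>orthant. \<forall>c::real. c > 0 \<longrightarrow> w (c *\<^sub>R x) = c * w x)"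

definition pos_on_cone :: "(real^'n \<Rightarrow> real) \<Rightarrow> bool" where
  "pos_on_cone w \<longleftrightarrow> (\<forall>x\<in>orthant. 0 \<le> w x) \<and> (\<forall>x\<in>orthant0. 0 < w x)"

definition lambda_M :: "(real^'n^'n) set \<Rightarrow> real" where
  "lambda_M Ms = (THE l. \<exists>w. homogeneous1 w \<and> pos_on_cone w \<and>
       (\<exists>L. L-lipschitz_on orthant w) \<and>
       (\<forall>t\<ge>0. \<forall>x\<in>orthant. exp (l * t) * w x = value_fun w Ms t x))"

end

theory Submission
  imports Defs
begin

text \<open>
  Write \<open>S(t,x)\<close> (\<open>sum_value\<close>) for the value function of the coordinate sum \<open>\<Sigma>\<^sub>i x\<^sub>i\<close>
  and \<open>B(t) = S(t,\<one>)\<close> (\<open>growth\<close>). Linearity of the dynamics makes \<open>S(t,\<cdot>)\<close> monotone, positively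
  homogeneous and subadditive on the orthant, hence \<open>S(t,x) \<le> |x| B(t)\<close>, and the semigroup
  property of reachable sets gives \<open>B(s+t) \<le> B(s) B(t)\<close>. Irreducibility of one matrix of
  \<open>\<M>\<close> yields a Harnack inequality: after time 1 some reachable point dominates
  \<open>\<delta> \<Sigma>\<^sub>i x\<^sub>i \<one>\<close>, whence \<open>\<delta> B(s) B(t) \<le> B(s+1+t)\<close>. A Fekete-type argument then gives
  \<open>\<Lambda>\<close> with \<open>|ln B(t) - \<Lambda> t|\<close> bounded, so that \<open>e\<^sup>-\<^sup>\<Lambda>\<^sup>t S(t,x)\<close> is bounded above and below
  by multiples of \<open>|x|\<close> and \<open>\<Sigma>\<^sub>i x\<^sub>i\<close>. Its limit superior in \<open>t\<close> is a Lipschitz,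
  homogeneous, positive eigenfunction with eigenvalue \<open>\<Lambda>\<close>, so \<open>\<Lambda> = \<lambda>(\<M>)\<close>; the same
  two-sided exponential bounds, transferred to \<open>v\<^sub>0\<close> by compactness of the simplex, give
  \<open>ln v(t,x) = \<Lambda> t + O(1)\<close> locally uniformly on \<open>K\<^sub>0\<close>.
\<close>

lemma gronwall_integral:
  fixes \<phi> :: "real \<Rightarrow> real"
  assumes cont: "continuous_on {0..t} \<phi>" and K: "K \<ge> 0"
    and le: "\<And>s. s \<in> {0..t} \<Longrightarrow> \<phi> s \<le> a + K * integral {0..s} \<phi>"
    and s: "s \<in> {0..t}"
  shows "\<phi> s \<le> a * exp (K * s)"
proof -
  define F where "F u = integral {0..u} \<phi>" for u
  define G where "G u = exp (- K * u) * (a + K * F u)" for u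
  have F_deriv: "(F has_real_derivative \<phi> u) (at u within {0..t})" if "u \<in> {0..t}" for u
    unfolding F_def by (rule integral_has_real_derivative[OF cont that])
  have F_cont: "continuous_on {0..t} F"
    unfolding F_def by (rule indefinite_integral_continuous_1[OF integrable_continuous_real[OF cont]])
  have "G s \<le> G 0"
  proof (rule DERIV_nonpos_imp_decreasing_open[of 0 s G])
    show "0 \<le> s" using s by auto
    show "continuous_on {0..s} G"
      unfolding G_def using s by (intro continuous_intros continuous_on_subset[OF F_cont]) auto
    fix u assume u: "0 < u" "u < s"
    have "(F has_real_derivative \<phi> u) (at u)"
      using F_deriv[of u] u s by (simp add: at_within_Icc_at)
    then have "(G has_real_derivative exp (- K * u) * (K * \<phi> u - K * (a + K * F u))) (at u)"
      unfolding G_def by (auto intro!: derivative_eq_intros simp: algebra_simps)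
    moreover have "K * \<phi> u \<le> K * (a + K * F u)"
      using le[of u] u s K by (intro mult_left_mono) (auto simp: F_def)
    ultimately show "\<exists>y. (G has_real_derivative y) (at u) \<and> y \<le> 0"
      by (intro exI conjI) (auto simp: mult_nonneg_nonpos)
  qed
  then have "a + K * F s \<le> a * exp (K * s)"
    by (simp add: G_def F_def exp_minus field_simps)
  then show ?thesis using le[OF s] by (simp add: F_def)
qed

lemma last_zero_before_negative:
  fixes f :: "real \<Rightarrow> real"
  assumes cont: "continuous_on {0..s} f" and f0: "f 0 \<ge> 0" and fs: "f s < 0" and s: "0 \<le> s"
  obtains \<tau> where "\<tau> \<in> {0..s}" "f \<tau> = 0" "\<And>r. r \<in> {\<tau>..s} \<Longrightarrow> f r \<le> 0"
proof -
  define Z where "Z = {r \<in> {0..s}. f r = 0}"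
  have "Z \<noteq> {}"
    using IVT'[of "\<lambda>r. - f r" 0 0 s] f0 fs s cont by (auto intro: continuous_intros simp: Z_def)
  moreover have "bdd_above Z"
    unfolding Z_def by (rule bdd_aboveI[of _ s]) auto
  moreover have "closed Z"
    using continuous_closed_preimage[OF cont closed_atLeastAtMost closed_singleton]
    by (simp add: Z_def vimage_def Int_def)
  ultimately have Sup_Z: "Sup Z \<in> Z"
    by (rule closed_contains_Sup)
  show ?thesis
  proof (rule that)
    show "Sup Z \<in> {0..s}" "f (Sup Z) = 0" using Sup_Z by (auto simp: Z_def)
    fix r assume r: "r \<in> {Sup Z..s}"
    show "f r \<le> 0"
    proof (rule ccontr)
      assume "\<not> f r \<le> 0"
      moreover have r0: "r \<in> {0..s}" using r Sup_Z by (auto simp: Z_def)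
      moreover have "continuous_on {r..s} (\<lambda>r. - f r)"
        using r0 by (intro continuous_intros continuous_on_subset[OF cont]) auto
      ultimately obtain z where z: "r \<le> z" "z \<le> s" "f z = 0"
        using IVT'[of "\<lambda>r. - f r" r 0 s] fs r by auto
      then have "z \<le> Sup Z"
        using r0 \<open>bdd_above Z\<close> by (intro cSup_upper) (auto simp: Z_def)
      with z r \<open>\<not> f r \<le> 0\<close> Sup_Z show False
        by (cases "r = Sup Z") (auto simp: Z_def)
    qed
  qed
qed

lemma has_integral_power_Icc0:
  assumes "0 \<le> s"
  shows "((\<lambda>r::real. r ^ k) has_integral (s ^ Suc k / Suc k)) {0..s}"
proof -
  have "((\<lambda>r::real. r ^ k) has_integral (s ^ Suc k / Suc k - 0 ^ Suc k / Suc k)) {0..s}"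
  proof (rule fundamental_theorem_of_calculus[OF assms])
    fix r :: real
    have "((\<lambda>r. r ^ Suc k / Suc k) has_real_derivative (real (Suc k) * r ^ k / Suc k)) (at r within {0..s})"
      by (intro derivative_eq_intros) auto
    then show "((\<lambda>r. r ^ Suc k / real (Suc k)) has_vector_derivative r ^ k) (at r within {0..s})"
      by (simp add: has_real_derivative_iff_has_vector_derivative del: of_nat_Suc)
  qed
  then show ?thesis by simp
qed

lemma bilinear_matrix_vector_mult: "bilinear (\<lambda>(A::real^'n^'m) (x::real^'n). A *v x)"
  unfolding bilinear_def
proof (intro conjI allI)
  show "linear (\<lambda>A::real^'n^'m. A *v y)" for y
    by (rule linearI) (simp_all add: matrix_vector_mult_add_rdistrib scaleR_matrix_vector_assoc)
qed simp

lemma integrable_on_vec_nth: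
  fixes g :: "real \<Rightarrow> real^'n"
  shows "g integrable_on S \<Longrightarrow> (\<lambda>r. g r $ i) integrable_on S"
  using integrable_linear[OF _ bounded_linear_vec_nth, of g S i] by (simp add: o_def)

lemma lebesgue_measurable_Icc [simp]: "{a..b::real} \<in> sets lebesgue"
  by (simp add: borel_closed)

lemma borel_measurable_lebesgue_on_Icc_shift:
  fixes M :: "real \<Rightarrow> 'b::euclidean_space"
  assumes M: "M \<in> borel_measurable (lebesgue_on {0..s + t})" and s: "0 \<le> s"
  shows "(\<lambda>r. M (s + r)) \<in> borel_measurable (lebesgue_on {0..t})"
  unfolding borel_measurable_lebesgue_on_preimage_borel[OF lebesgue_measurable_Icc]
proof (intro allI impI)
  fix T :: "'b set" assume T: "T \<in> sets borel"
  have "{x \<in> {0..t}. M (s + x) \<in> T} = (\<lambda>z. - s + z) ` ({z \<in> {0..s + t}. M z \<in> T} \<inter> {s..s + t})"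
    using s by (force intro: image_eqI[of _ _ "s + _"])
  also have "\<dots> \<in> sets lebesgue"
    using M T borel_measurable_lebesgue_on_preimage_borel[of "{0..s + t}" M]
    by (intro lebesgue_sets_translation sets.Int) auto
  finally show "{x \<in> {0..t}. M (s + x) \<in> T} \<in> sets lebesgue" .
qed

lemma borel_measurable_lebesgue_on_Icc_glue:
  fixes M\<^sub>1 M\<^sub>2 :: "real \<Rightarrow> 'b::euclidean_space"
  assumes M\<^sub>1: "M\<^sub>1 \<in> borel_measurable (lebesgue_on {0..s})"
    and M\<^sub>2: "M\<^sub>2 \<in> borel_measurable (lebesgue_on {0..t})" and "0 \<le> s" "0 \<le> t"
  shows "(\<lambda>r. if r \<le> s then M\<^sub>1 r else M\<^sub>2 (r - s)) \<in> borel_measurable (lebesgue_on {0..s + t})"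
  unfolding borel_measurable_lebesgue_on_preimage_borel[OF lebesgue_measurable_Icc]
proof (intro allI impI)
  fix T :: "'b set" assume T: "T \<in> sets borel"
  have "{x \<in> {0..s + t}. (if x \<le> s then M\<^sub>1 x else M\<^sub>2 (x - s)) \<in> T}
      = {x \<in> {0..s}. M\<^sub>1 x \<in> T} \<union> ((\<lambda>z. s + z) ` {z \<in> {0..t}. M\<^sub>2 z \<in> T} \<inter> {s<..})"
  proof (rule set_eqI, rule iffI)
    fix x assume x: "x \<in> {x \<in> {0..s + t}. (if x \<le> s then M\<^sub>1 x else M\<^sub>2 (x - s)) \<in> T}"
    show "x \<in> {x \<in> {0..s}. M\<^sub>1 x \<in> T} \<union> ((\<lambda>z. s + z) ` {z \<in> {0..t}. M\<^sub>2 z \<in> T} \<inter> {s<..})"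
    proof (cases "x \<le> s")
      case False
      then have "x \<in> (\<lambda>z. s + z) ` {z \<in> {0..t}. M\<^sub>2 z \<in> T}"
        using x by (intro image_eqI[of _ _ "x - s"]) auto
      then show ?thesis using False by auto
    qed (use x in auto)
  qed (use \<open>0 \<le> s\<close> \<open>0 \<le> t\<close> in auto)
  also have "\<dots> \<in> sets lebesgue"
    using M\<^sub>1 M\<^sub>2 T borel_measurable_lebesgue_on_preimage_borel[of "{0..s}" M\<^sub>1]
      borel_measurable_lebesgue_on_preimage_borel[of "{0..t}" M\<^sub>2]
    by (intro sets.Un sets.Int lebesgue_sets_translation) (auto simp: borel_open)
  finally show "{x \<in> {0..s + t}. (if x \<le> s then M\<^sub>1 x else M\<^sub>2 (x - s)) \<in> T} \<in> sets lebesgue" .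
qed


section \<open>Trajectories of the linear control system\<close>

lemma is_trajectoryD:
  assumes "is_trajectory M x t y"
  shows "continuous_on {0..t} y"
    and "\<And>s. s \<in> {0..t} \<Longrightarrow> (\<lambda>r. M r *v y r) integrable_on {0..s}"
    and "\<And>s. s \<in> {0..t} \<Longrightarrow> y s = x + integral {0..s} (\<lambda>r. M r *v y r)"
  using assms unfolding is_trajectory_def by blast+

lemma is_trajectory_at_0: "is_trajectory M x t y \<Longrightarrow> 0 \<le> t \<Longrightarrow> y 0 = x"
  using is_trajectoryD(3)[of M x t y 0] by simp

lemma is_trajectory_restrict:
  assumes "is_trajectory M x t y" "s \<le> t"
  shows "is_trajectory M x s y"
  using is_trajectoryD[OF assms(1)] assms(2) unfolding is_trajectory_def
  by (auto intro: continuous_on_subset)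

lemma is_trajectory_add:
  assumes y: "is_trajectory M x t y" and y': "is_trajectory M x' t y'"
  shows "is_trajectory M (x + x') t (\<lambda>s. y s + y' s)"
  unfolding is_trajectory_def
proof (intro conjI ballI)
  show "continuous_on {0..t} (\<lambda>s. y s + y' s)"
    using is_trajectoryD(1)[OF y] is_trajectoryD(1)[OF y'] by (intro continuous_intros)
  fix s assume s: "s \<in> {0..t}"
  note int = is_trajectoryD(2)[OF y s] is_trajectoryD(2)[OF y' s]
  show "(\<lambda>r. M r *v (y r + y' r)) integrable_on {0..s}"
    using integrable_add[OF int] by (simp add: matrix_vector_right_distrib)
  show "y s + y' s = x + x' + integral {0..s} (\<lambda>r. M r *v (y r + y' r))"
    using integral_add[OF int] is_trajectoryD(3)[OF y s] is_trajectoryD(3)[OF y' s]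
    by (simp add: matrix_vector_right_distrib add_ac)
qed

lemma is_trajectory_scaleR:
  assumes y: "is_trajectory M x t y"
  shows "is_trajectory M (c *\<^sub>R x) t (\<lambda>s. c *\<^sub>R y s)"
  unfolding is_trajectory_def
proof (intro conjI ballI)
  show "continuous_on {0..t} (\<lambda>s. c *\<^sub>R y s)"
    using is_trajectoryD(1)[OF y] by (intro continuous_intros)
  fix s assume s: "s \<in> {0..t}"
  show "(\<lambda>r. M r *v (c *\<^sub>R y r)) integrable_on {0..s}"
    using integrable_cmul[OF is_trajectoryD(2)[OF y s], of c] by (simp add: matrix_vector_mult_scaleR)
  show "c *\<^sub>R y s = c *\<^sub>R x + integral {0..s} (\<lambda>r. M r *v (c *\<^sub>R y r))"
    using is_trajectoryD(3)[OF y s] by (simp add: matrix_vector_mult_scaleR scaleR_add_right)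
qed

lemma is_trajectory_shift:
  assumes y: "is_trajectory M x (s + t) y" and s: "0 \<le> s" and t: "0 \<le> t"
  shows "is_trajectory (\<lambda>r. M (s + r)) (y s) t (\<lambda>r. y (s + r))"
  unfolding is_trajectory_def
proof (intro conjI ballI)
  show "continuous_on {0..t} (\<lambda>r. y (s + r))"
    using s by (intro continuous_on_compose2[OF is_trajectoryD(1)[OF y]] continuous_intros) auto
  fix r assume r: "r \<in> {0..t}"
  have sr: "s + r \<in> {0..s + t}" and s': "s \<in> {0..s + t}" using r s t by auto
  have int: "(\<lambda>q. M q *v y q) integrable_on {s..s + r}"
    by (rule integrable_subinterval_real[OF is_trajectoryD(2)[OF y sr]]) (use s in auto)
  have "((\<lambda>q. M q *v y q) has_integral integral {s..s + r} (\<lambda>q. M q *v y q)) {0 + s..r + s}"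
    using integrable_integral[OF int] by (simp add: add.commute)
  then have "(((\<lambda>q. M q *v y q) \<circ> (+) s) has_integral integral {s..s + r} (\<lambda>q. M q *v y q)) {0..r}"
    unfolding has_integral_shift_Icc_real .
  then have shifted: "((\<lambda>q. M (s + q) *v y (s + q)) has_integral integral {s..s + r} (\<lambda>q. M q *v y q)) {0..r}"
    by (simp add: o_def)
  then show "(\<lambda>q. M (s + q) *v y (s + q)) integrable_on {0..r}" by blast
  have "integral {0..s} (\<lambda>q. M q *v y q) + integral {s..s + r} (\<lambda>q. M q *v y q)
      = integral {0..s + r} (\<lambda>q. M q *v y q)"
    using s r by (intro Henstock_Kurzweil_Integration.integral_combine is_trajectoryD(2)[OF y sr]) auto
  then show "y (s + r) = y s + integral {0..r} (\<lambda>q. M (s + q) *v y (s + q))"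
    using is_trajectoryD(3)[OF y sr] is_trajectoryD(3)[OF y s'] integral_unique[OF shifted]
    by (simp add: algebra_simps)
qed

lemma has_integral_trajectory:
  "is_trajectory M x t y \<Longrightarrow> s \<in> {0..t} \<Longrightarrow> ((\<lambda>q. M q *v y q) has_integral (y s - x)) {0..s}"
  using is_trajectoryD(2,3)[of M x t y s] by (simp add: has_integral_iff)

lemma is_trajectory_glue:
  assumes y\<^sub>1: "is_trajectory M\<^sub>1 x s y\<^sub>1" and y\<^sub>2: "is_trajectory M\<^sub>2 (y\<^sub>1 s) t y\<^sub>2"
    and s: "0 \<le> s" and t: "0 \<le> t"
  shows "is_trajectory (\<lambda>r. if r \<le> s then M\<^sub>1 r else M\<^sub>2 (r - s)) x (s + t)
            (\<lambda>r. if r \<le> s then y\<^sub>1 r else y\<^sub>2 (r - s))"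
    (is "is_trajectory ?M x (s + t) ?y")
proof -
  have "continuous_on {0..s + t} ?y"
  proof (rule continuous_on_cases_le)
    show "continuous_on {r \<in> {0..s + t}. r \<le> s} y\<^sub>1"
      by (rule continuous_on_subset[OF is_trajectoryD(1)[OF y\<^sub>1]]) auto
    show "continuous_on {r \<in> {0..s + t}. s \<le> r} (\<lambda>r. y\<^sub>2 (r - s))"
      by (rule continuous_on_compose2[OF is_trajectoryD(1)[OF y\<^sub>2]]) (auto intro!: continuous_intros)
  qed (auto simp: is_trajectory_at_0[OF y\<^sub>2 t])
  moreover have "((\<lambda>q. ?M q *v ?y q) has_integral (?y r - x)) {0..r}" if r: "r \<in> {0..s + t}" for r
  proof (cases "r \<le> s")
    case True
    then show ?thesis
      using has_integral_trajectory[OF y\<^sub>1, of r] r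
      by (subst has_integral_cong[of _ _ "\<lambda>q. M\<^sub>1 q *v y\<^sub>1 q"]) auto
  next
    case False
    have first: "((\<lambda>q. ?M q *v ?y q) has_integral (y\<^sub>1 s - x)) {0..s}"
      using has_integral_trajectory[OF y\<^sub>1, of s] s
      by (subst has_integral_cong[of _ _ "\<lambda>q. M\<^sub>1 q *v y\<^sub>1 q"]) auto
    have "(((\<lambda>q. M\<^sub>2 (q - s) *v y\<^sub>2 (q - s)) \<circ> (+) s) has_integral (y\<^sub>2 (r - s) - y\<^sub>1 s)) {0..r - s}"
      using has_integral_trajectory[OF y\<^sub>2, of "r - s"] r False by (simp add: o_def)
    then have "((\<lambda>q. M\<^sub>2 (q - s) *v y\<^sub>2 (q - s)) has_integral (y\<^sub>2 (r - s) - y\<^sub>1 s)) {s..r}"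
      using has_integral_shift_Icc_real[of "\<lambda>q. M\<^sub>2 (q - s) *v y\<^sub>2 (q - s)" s _ 0 "r - s"]
      by (simp add: add.commute)
    then have second: "((\<lambda>q. ?M q *v ?y q) has_integral (y\<^sub>2 (r - s) - y\<^sub>1 s)) {s..r}"
      by (subst has_integral_spike_finite_eq[of "{s}"]) auto
    show ?thesis
      using has_integral_combine[OF _ _ first second] s False by simp
  qed
  ultimately show ?thesis
    unfolding is_trajectory_def by (auto simp: has_integral_iff)
qed

lemma trajectory_component_increment:
  assumes y: "is_trajectory M x t y" and \<tau>: "0 \<le> \<tau>" "\<tau> \<le> s" and s: "s \<le> t"
  shows "(\<lambda>r. (M r *v y r) $ i) integrable_on {\<tau>..s}"
    and "y s $ i = y \<tau> $ i + integral {\<tau>..s} (\<lambda>r. (M r *v y r) $ i)"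
proof -
  have s': "s \<in> {0..t}" and \<tau>': "\<tau> \<in> {0..t}" using \<tau> s by auto
  have int: "(\<lambda>r. M r *v y r) integrable_on {\<tau>..s}"
    by (rule integrable_subinterval_real[OF is_trajectoryD(2)[OF y s']]) (use \<tau> in auto)
  then show "(\<lambda>r. (M r *v y r) $ i) integrable_on {\<tau>..s}"
    by (rule integrable_on_vec_nth)
  have "integral {0..\<tau>} (\<lambda>r. M r *v y r) + integral {\<tau>..s} (\<lambda>r. M r *v y r)
      = integral {0..s} (\<lambda>r. M r *v y r)"
    using \<tau> by (intro Henstock_Kurzweil_Integration.integral_combine is_trajectoryD(2)[OF y s']) auto
  then have "y s = y \<tau> + integral {\<tau>..s} (\<lambda>r. M r *v y r)"
    using is_trajectoryD(3)[OF y s'] is_trajectoryD(3)[OF y \<tau>'] by (simp add: algebra_simps)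
  then show "y s $ i = y \<tau> $ i + integral {\<tau>..s} (\<lambda>r. (M r *v y r) $ i)"
    using integral_component_eq_cart[OF int, of i] by simp
qed

definition picard_iterate :: "(real \<Rightarrow> real^'n^'n) \<Rightarrow> real^'n \<Rightarrow> nat \<Rightarrow> real \<Rightarrow> real^'n" where
  "picard_iterate M x k = ((\<lambda>z s. x + integral {0..s} (\<lambda>r. M r *v z r)) ^^ k) (\<lambda>_. x)"

lemma picard_iterate_0: "picard_iterate M x 0 = (\<lambda>_. x)"
  by (simp add: picard_iterate_def)

lemma picard_iterate_Suc:
  "picard_iterate M x (Suc k) s = x + integral {0..s} (\<lambda>r. M r *v picard_iterate M x k r)"
  by (simp add: picard_iterate_def)

locale metzler_system =
  fixes Ms :: "(real^'n^'n) set" and R :: real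
  assumes rate_nonneg: "R \<ge> 0"
    and norm_mult_le: "\<And>m x. m \<in> Ms \<Longrightarrow> norm (m *v x) \<le> R * norm x"
    and abs_entry_le: "\<And>m i j. m \<in> Ms \<Longrightarrow> \<bar>m $ i $ j\<bar> \<le> R"
    and metzler: "\<And>m. m \<in> Ms \<Longrightarrow> metzler m"
begin

lemma bounded_controls: "bounded Ms"
  unfolding bounded_iff
proof (intro exI ballI)
  fix m assume m: "m \<in> Ms"
  have "norm m \<le> (\<Sum>i\<in>UNIV. norm (m $ i))"
    using L2_set_le_sum[of UNIV "\<lambda>i. norm (m $ i)"] by (simp add: norm_vec_def[of m])
  also have "\<dots> \<le> (\<Sum>i\<in>(UNIV::'n set). \<Sum>j\<in>(UNIV::'n set). R)"
  proof (rule sum_mono)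
    fix i
    have "norm (m $ i) \<le> (\<Sum>j\<in>UNIV. \<bar>m $ i $ j\<bar>)" by (rule norm_le_l1_cart)
    also have "\<dots> \<le> (\<Sum>j\<in>(UNIV::'n set). R)" by (intro sum_mono abs_entry_le[OF m])
    finally show "norm (m $ i) \<le> (\<Sum>j\<in>(UNIV::'n set). R)" .
  qed
  finally show "norm m \<le> real CARD('n) * (real CARD('n) * R)" by simp
qed

lemma admissible_control_in: "admissible_control Ms t M \<Longrightarrow> r \<in> {0..t} \<Longrightarrow> M r \<in> Ms"
  unfolding admissible_control_def by blast

lemma admissible_control_const: "m \<in> Ms \<Longrightarrow> admissible_control Ms t (\<lambda>_. m)"
  unfolding admissible_control_def by simp

lemma admissible_control_restrict:
  "admissible_control Ms t M \<Longrightarrow> s \<le> t \<Longrightarrow> admissible_control Ms s M"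
  unfolding admissible_control_def by (auto intro: measurable_restrict_mono[where A = "{0..t}"])

lemma admissible_control_shift:
  "admissible_control Ms (s + t) M \<Longrightarrow> 0 \<le> s \<Longrightarrow> admissible_control Ms t (\<lambda>r. M (s + r))"
  unfolding admissible_control_def by (auto intro: borel_measurable_lebesgue_on_Icc_shift)

lemma admissible_control_glue:
  "admissible_control Ms s M\<^sub>1 \<Longrightarrow> admissible_control Ms t M\<^sub>2 \<Longrightarrow> 0 \<le> s \<Longrightarrow> 0 \<le> t \<Longrightarrow>
    admissible_control Ms (s + t) (\<lambda>r. if r \<le> s then M\<^sub>1 r else M\<^sub>2 (r - s))"
  unfolding admissible_control_def by (auto intro: borel_measurable_lebesgue_on_Icc_glue)

lemma integrable_control_action:
  assumes M: "admissible_control Ms t M" and y: "continuous_on {0..t} y" and s: "s \<le> t"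
  shows "(\<lambda>r. M r *v y r) integrable_on {0..s}"
proof -
  have "M \<in> borel_measurable (lebesgue_on {0..s})"
    using admissible_control_restrict[OF M s] unfolding admissible_control_def by blast
  moreover have "bounded (M ` {0..s})"
    using M s by (intro bounded_subset[OF bounded_controls]) (auto simp: admissible_control_def)
  moreover have "y absolutely_integrable_on {0..s}"
    using s by (intro absolutely_integrable_continuous_real continuous_on_subset[OF y]) auto
  ultimately have "(\<lambda>r. M r *v y r) absolutely_integrable_on {0..s}"
    using absolutely_integrable_bounded_measurable_product[OF bilinear_matrix_vector_mult _ lebesgue_measurable_Icc] by blast
  then show ?thesis
    using set_lebesgue_integral_eq_integral(1) by blast
qed

lemma norm_integral_control_action_le:
  assumes M: "admissible_control Ms t M" and s: "s \<in> {0..t}"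
    and int: "(\<lambda>r. M r *v y r) integrable_on {0..s}" and g: "g integrable_on {0..s}"
    and le: "\<And>r. r \<in> {0..s} \<Longrightarrow> R * norm (y r) \<le> g r"
  shows "norm (integral {0..s} (\<lambda>r. M r *v y r)) \<le> integral {0..s} g"
proof (rule integral_norm_bound_integral[OF int g])
  fix r assume r: "r \<in> {0..s}"
  then have "M r \<in> Ms" using s by (intro admissible_control_in[OF M]) auto
  then show "norm (M r *v y r) \<le> g r"
    using norm_mult_le le[OF r] order.trans by blast
qed

lemma norm_trajectory_le:
  assumes M: "admissible_control Ms t M" and y: "is_trajectory M x t y" and s: "s \<in> {0..t}"
  shows "norm (y s) \<le> norm x * exp (R * s)"
proof (rule gronwall_integral[where \<phi> = "\<lambda>s. norm (y s)"])
  fix u assume u: "u \<in> {0..t}"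
  have "continuous_on {0..u} y"
    using is_trajectoryD(1)[OF y] u by (auto intro: continuous_on_subset)
  have "norm (y u) \<le> norm x + norm (integral {0..u} (\<lambda>r. M r *v y r))"
    using is_trajectoryD(3)[OF y u] by (simp add: norm_triangle_ineq)
  also have "norm (integral {0..u} (\<lambda>r. M r *v y r)) \<le> integral {0..u} (\<lambda>r. R * norm (y r))"
    using \<open>continuous_on {0..u} y\<close>
    by (intro norm_integral_control_action_le[OF M u is_trajectoryD(2)[OF y u]]
        integrable_continuous_real continuous_intros) auto
  finally show "norm (y u) \<le> norm x + R * integral {0..u} (\<lambda>r. norm (y r))" by simp
qed (use s rate_nonneg is_trajectoryD(1)[OF y] in \<open>auto intro: continuous_intros\<close>)

subsection \<open>Existence of trajectories\<close>

lemma picard_iterate_continuous: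
  assumes M: "admissible_control Ms t M"
  shows "continuous_on {0..t} (picard_iterate M x k)"
proof (induction k)
  case (Suc k)
  have "continuous_on {0..t} (\<lambda>s. integral {0..s} (\<lambda>r. M r *v picard_iterate M x k r))"
    by (rule indefinite_integral_continuous_1[OF integrable_control_action[OF M Suc order_refl]])
  then show ?case
    unfolding picard_iterate_Suc[abs_def] by (intro continuous_intros)
qed (simp add: picard_iterate_0)

lemma picard_iterate_integrable:
  "admissible_control Ms t M \<Longrightarrow> s \<le> t \<Longrightarrow> (\<lambda>r. M r *v picard_iterate M x k r) integrable_on {0..s}"
  by (rule integrable_control_action[OF _ picard_iterate_continuous])

lemma picard_iterate_step_le:
  assumes M: "admissible_control Ms t M" and s: "s \<in> {0..t}"
  shows "norm (picard_iterate M x (Suc k) s - picard_iterate M x k s)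
           \<le> norm x * (R * s) ^ Suc k / fact (Suc k)"
  using s
proof (induction k arbitrary: s)
  case 0
  have "norm (integral {0..s} (\<lambda>r. M r *v x)) \<le> integral {0..s} (\<lambda>r. R * norm x)"
    using picard_iterate_integrable[OF M, of s x 0] 0
    by (intro norm_integral_control_action_le[OF M 0]) (auto simp: picard_iterate_0)
  then show ?case using 0 by (simp add: picard_iterate_Suc picard_iterate_0 mult_ac)
next
  case (Suc k)
  let ?P = "picard_iterate M x"
  let ?c = "R * norm x * R ^ Suc k / fact (Suc k)"
  have int: "(\<lambda>r. M r *v (?P (Suc k) r - ?P k r)) integrable_on {0..s}"
    using integrable_diff[OF picard_iterate_integrable[OF M, of s x "Suc k"]
        picard_iterate_integrable[OF M, of s x k]] Suc.prems
    by (simp add: matrix_vector_mult_diff_distrib)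
  have "?P (Suc (Suc k)) s - ?P (Suc k) s = integral {0..s} (\<lambda>r. M r *v (?P (Suc k) r - ?P k r))"
    using picard_iterate_integrable[OF M, of s x "Suc k"] picard_iterate_integrable[OF M, of s x k] Suc.prems
    by (simp add: picard_iterate_Suc[of M x "Suc k"] picard_iterate_Suc[of M x k] integral_diff
        matrix_vector_mult_diff_distrib)
  also have "norm \<dots> \<le> integral {0..s} (\<lambda>r. ?c * r ^ Suc k)"
  proof (rule norm_integral_control_action_le[OF M Suc.prems int])
    fix r assume r: "r \<in> {0..s}"
    then have "R * norm (?P (Suc k) r - ?P k r) \<le> R * (norm x * (R * r) ^ Suc k / fact (Suc k))"
      using Suc.IH[of r] Suc.prems rate_nonneg by (intro mult_left_mono) auto
    then show "R * norm (?P (Suc k) r - ?P k r) \<le> ?c * r ^ Suc k"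
      by (simp add: power_mult_distrib mult_ac)
  qed (intro integrable_continuous_real continuous_intros)
  also have "\<dots> = ?c * (s ^ Suc (Suc k) / Suc (Suc k))"
    using has_integral_power_Icc0[of s "Suc k"] Suc.prems by (simp add: integral_unique)
  also have "\<dots> = norm x * (R * s) ^ Suc (Suc k) / fact (Suc (Suc k))"
    by (simp add: power_mult_distrib field_simps del: of_nat_Suc)
  finally show ?case .
qed

lemma picard_iterate_uniform_limit:
  assumes M: "admissible_control Ms t M"
  obtains y where "uniform_limit {0..t} (picard_iterate M x) y sequentially"
proof -
  let ?D = "\<lambda>k s. picard_iterate M x (Suc k) s - picard_iterate M x k s"
  let ?B = "\<lambda>k. norm x * (R * t) ^ Suc k / fact (Suc k)"
  have "summable (\<lambda>k. inverse (fact (Suc k)) * (R * t) ^ Suc k)"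
    using summable_exp[of "R * t"] by (subst summable_Suc_iff)
  then have "summable (\<lambda>k. norm x * (inverse (fact (Suc k)) * (R * t) ^ Suc k))"
    by (rule summable_mult)
  then have "summable ?B" by (simp add: divide_inverse mult_ac)
  moreover have "norm (?D k s) \<le> ?B k" if s: "s \<in> {0..t}" for k s
  proof -
    have "(R * s) ^ Suc k \<le> (R * t) ^ Suc k"
      using s rate_nonneg by (intro power_mono mult_left_mono) auto
    then have "norm x * (R * s) ^ Suc k / fact (Suc k) \<le> ?B k"
      by (intro divide_right_mono mult_left_mono) auto
    then show ?thesis
      using picard_iterate_step_le[OF M s, of x k] by linarith
  qed
  ultimately have "uniform_limit {0..t} (\<lambda>n s. \<Sum>k<n. ?D k s) (\<lambda>s. \<Sum>k. ?D k s) sequentially"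
    by (intro Weierstrass_m_test_ev) auto
  then have "uniform_limit {0..t} (\<lambda>n s. x + (\<Sum>k<n. ?D k s)) (\<lambda>s. x + (\<Sum>k. ?D k s)) sequentially"
    by (intro uniform_limit_intros) auto
  moreover have "x + (\<Sum>k<n. ?D k s) = picard_iterate M x n s" for n s
    using sum_lessThan_telescope[of "\<lambda>k. picard_iterate M x k s" n] by (simp add: picard_iterate_0)
  ultimately show ?thesis using that by simp
qed

lemma tendsto_integral_control_action:
  assumes M: "admissible_control Ms t M" and lim: "uniform_limit {0..t} Y y sequentially"
    and Y: "\<And>n. continuous_on {0..t} (Y n)" and y: "continuous_on {0..t} y" and s: "s \<in> {0..t}"
  shows "(\<lambda>n. integral {0..s} (\<lambda>r. M r *v Y n r)) \<longlonglongrightarrow> integral {0..s} (\<lambda>r. M r *v y r)"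
  unfolding tendsto_iff
proof (intro allI impI)
  fix e :: real assume e: "e > 0"
  define \<epsilon> where "\<epsilon> = e / (R * s + 1)"
  have Rs: "R * s + 1 > 0" using rate_nonneg s by (simp add: add_nonneg_pos)
  then have \<epsilon>: "\<epsilon> > 0" unfolding \<epsilon>_def using e by simp
  show "\<forall>\<^sub>F n in sequentially. dist (integral {0..s} (\<lambda>r. M r *v Y n r)) (integral {0..s} (\<lambda>r. M r *v y r)) < e"
    using uniform_limitD[OF lim \<epsilon>]
  proof eventually_elim
    case (elim n)
    have int_Y: "(\<lambda>r. M r *v Y n r) integrable_on {0..s}" and int_y: "(\<lambda>r. M r *v y r) integrable_on {0..s}"
      using s by (auto intro: integrable_control_action[OF M] Y y)
    have "norm (integral {0..s} (\<lambda>r. M r *v (Y n r - y r))) \<le> integral {0..s} (\<lambda>r. R * \<epsilon>)"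
    proof (rule norm_integral_control_action_le[OF M s])
      show "(\<lambda>r. M r *v (Y n r - y r)) integrable_on {0..s}"
        using integrable_diff[OF int_Y int_y] by (simp add: matrix_vector_mult_diff_distrib)
      fix r assume "r \<in> {0..s}"
      then show "R * norm (Y n r - y r) \<le> R * \<epsilon>"
        using elim s rate_nonneg by (intro mult_left_mono) (auto simp: dist_norm less_imp_le)
    qed auto
    also have "\<dots> = (R * s) * \<epsilon>" using s by simp
    also have "\<dots> < (R * s + 1) * \<epsilon>" using \<epsilon> by simp
    also have "\<dots> = e" unfolding \<epsilon>_def using Rs by simp
    finally show ?case
      using int_Y int_y by (simp add: dist_norm integral_diff matrix_vector_mult_diff_distrib)
  qed
qed

lemma trajectory_exists:
  assumes M: "admissible_control Ms t M"
  obtains y where "is_trajectory M x t y"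
proof -
  obtain y where lim: "uniform_limit {0..t} (picard_iterate M x) y sequentially"
    using picard_iterate_uniform_limit[OF M] .
  have y: "continuous_on {0..t} y"
    by (rule uniform_limit_theorem[OF _ lim]) (use picard_iterate_continuous[OF M] in simp_all)
  have "y s = x + integral {0..s} (\<lambda>r. M r *v y r)" if s: "s \<in> {0..t}" for s
  proof -
    have "(\<lambda>n. picard_iterate M x (Suc n) s) \<longlonglongrightarrow> y s"
      using LIMSEQ_Suc[OF tendsto_uniform_limitI[OF lim s]] .
    moreover have "(\<lambda>n. picard_iterate M x (Suc n) s) \<longlonglongrightarrow> x + integral {0..s} (\<lambda>r. M r *v y r)"
      unfolding picard_iterate_Suc
      using tendsto_integral_control_action[OF M lim picard_iterate_continuous[OF M] y s]
      by (rule tendsto_add[OF tendsto_const])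
    ultimately show ?thesis by (rule LIMSEQ_unique)
  qed
  moreover have "(\<lambda>r. M r *v y r) integrable_on {0..s}" if "s \<in> {0..t}" for s
    using that by (intro integrable_control_action[OF M y]) simp
  ultimately have "is_trajectory M x t y"
    unfolding is_trajectory_def using y by blast
  then show ?thesis by (rule that)
qed

end

context metzler_system
begin

subsection \<open>Invariance of the orthant\<close>

lemma metzler_mult_component_lower:
  assumes m: "m \<in> Ms" and v: "v $ i \<le> 0"
  shows "- (real CARD('n) * R) * (\<Sum>j\<in>UNIV. max 0 (- v $ j)) \<le> (m *v v) $ i"
proof -
  let ?u = "\<Sum>j\<in>UNIV. max 0 (- v $ j)"
  have neg_le: "max 0 (- v $ j) \<le> ?u" for j
    by (intro member_le_sum) auto
  have "- R * ?u \<le> m $ i $ j * v $ j" for j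
  proof (cases "j = i")
    case True
    have "\<bar>m $ i $ j * v $ j\<bar> = \<bar>m $ i $ j\<bar> * max 0 (- v $ j)"
      using v True by (simp add: abs_mult)
    also have "\<dots> \<le> R * max 0 (- v $ j)"
      using abs_entry_le[OF m, of i j] by (intro mult_right_mono) auto
    also have "\<dots> \<le> R * ?u" by (intro mult_left_mono neg_le rate_nonneg)
    finally show ?thesis by linarith
  next
    case False
    then have m_ij: "0 \<le> m $ i $ j" using metzler[OF m] unfolding metzler_def by auto
    have "m $ i $ j * (- ?u) \<le> m $ i $ j * v $ j"
      using neg_le[of j] m_ij by (intro mult_left_mono) auto
    moreover have "m $ i $ j * ?u \<le> R * ?u"
      using abs_entry_le[OF m, of i j] m_ij by (intro mult_right_mono sum_nonneg) auto
    ultimately show ?thesis by linarith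
  qed
  then have "(\<Sum>j\<in>(UNIV::'n set). - R * ?u) \<le> (\<Sum>j\<in>UNIV. m $ i $ j * v $ j)"
    by (rule sum_mono)
  then show ?thesis by (simp add: matrix_vector_mult_def)
qed

lemma trajectory_component_ge_while_nonpos:
  assumes M: "admissible_control Ms t M" and y: "is_trajectory M x t y"
    and \<tau>: "0 \<le> \<tau>" "\<tau> \<le> s" "s \<le> t" and nonpos: "\<And>r. r \<in> {\<tau>..s} \<Longrightarrow> y r $ i \<le> 0"
  shows "y \<tau> $ i - (real CARD('n) * R) * integral {\<tau>..s} (\<lambda>r. \<Sum>j\<in>UNIV. max 0 (- y r $ j)) \<le> y s $ i"
proof -
  let ?u = "\<lambda>r. \<Sum>j\<in>UNIV. max 0 (- y r $ j)"
  have "continuous_on {\<tau>..s} ?u"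
    using \<tau> by (intro continuous_intros continuous_on_subset[OF is_trajectoryD(1)[OF y]]) auto
  then have "(\<lambda>r. - (real CARD('n) * R) * ?u r) integrable_on {\<tau>..s}"
    by (intro integrable_on_mult_right integrable_continuous_real)
  then have "integral {\<tau>..s} (\<lambda>r. - (real CARD('n) * R) * ?u r) \<le> integral {\<tau>..s} (\<lambda>r. (M r *v y r) $ i)"
    using trajectory_component_increment(1)[OF y \<tau>] nonpos \<tau>
    by (intro integral_le metzler_mult_component_lower admissible_control_in[OF M]) auto
  then show ?thesis
    using trajectory_component_increment(2)[OF y \<tau>, of i] by simp
qed

lemma trajectory_negative_part_le:
  assumes M: "admissible_control Ms t M" and y: "is_trajectory M x t y" and x: "x \<in> orthant"
    and s: "s \<in> {0..t}"
  shows "max 0 (- y s $ i) \<le> (real CARD('n) * R) * integral {0..s} (\<lambda>r. \<Sum>j\<in>UNIV. max 0 (- y r $ j))"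
proof -
  let ?u = "\<lambda>r. \<Sum>j\<in>UNIV. max 0 (- y r $ j)"
  let ?c = "real CARD('n) * R"
  have c: "0 \<le> ?c" using rate_nonneg by simp
  have "continuous_on {0..t} ?u"
    using is_trajectoryD(1)[OF y] by (intro continuous_intros)
  then have int_u: "?u integrable_on {a..b}" if "0 \<le> a" "b \<le> t" for a b
    using that by (intro integrable_continuous_real) (auto elim: continuous_on_subset)
  have int_u_nonneg: "0 \<le> integral {a..b} ?u" if "0 \<le> a" "b \<le> t" for a b
    using int_u[OF that] by (intro integral_nonneg sum_nonneg) auto
  show ?thesis
  proof (cases "0 \<le> y s $ i")
    case True
    then show ?thesis using s int_u_nonneg[of 0 s] c by simp
  next
    case False
    have "continuous_on {0..s} (\<lambda>r. y r $ i)"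
      using s by (intro continuous_intros continuous_on_subset[OF is_trajectoryD(1)[OF y]]) auto
    moreover have "0 \<le> y 0 $ i"
      using is_trajectory_at_0[OF y] s x unfolding orthant_def by auto
    ultimately obtain \<tau> where \<tau>: "\<tau> \<in> {0..s}" "y \<tau> $ i = 0" "\<And>r. r \<in> {\<tau>..s} \<Longrightarrow> y r $ i \<le> 0"
      using last_zero_before_negative[of s "\<lambda>r. y r $ i"] False s by auto
    then have "- ?c * integral {\<tau>..s} ?u \<le> y s $ i"
      using trajectory_component_ge_while_nonpos[OF M y, of \<tau> s i] s by auto
    moreover have "?c * integral {\<tau>..s} ?u \<le> ?c * integral {0..s} ?u"
    proof (rule mult_left_mono[OF _ c])
      have "integral {0..\<tau>} ?u + integral {\<tau>..s} ?u = integral {0..s} ?u"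
        using \<tau> s by (intro Henstock_Kurzweil_Integration.integral_combine int_u) auto
      moreover have "0 \<le> integral {0..\<tau>} ?u" using \<tau> s by (intro int_u_nonneg) auto
      ultimately show "integral {\<tau>..s} ?u \<le> integral {0..s} ?u" by linarith
    qed
    ultimately have "- ?c * integral {0..s} ?u \<le> y s $ i"
      unfolding mult_minus_left by linarith
    then show ?thesis using int_u_nonneg[of 0 s] c s by simp
  qed
qed

lemma trajectory_nonneg:
  assumes M: "admissible_control Ms t M" and y: "is_trajectory M x t y" and x: "x \<in> orthant"
    and s: "s \<in> {0..t}"
  shows "y s \<in> orthant"
proof -
  let ?u = "\<lambda>r. \<Sum>j\<in>UNIV. max 0 (- y r $ j)"
  let ?N = "real CARD('n)"
  have "?u s' \<le> 0 + (?N * (?N * R)) * integral {0..s'} ?u" if s': "s' \<in> {0..t}" for s'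
  proof -
    have "?u s' \<le> (\<Sum>j\<in>(UNIV::'n set). (?N * R) * integral {0..s'} ?u)"
      by (intro sum_mono trajectory_negative_part_le[OF M y x s'])
    then show ?thesis by simp
  qed
  \<comment> \<open>Gronwall for the total negative part \<open>?u\<close>, which vanishes at time \<open>0\<close>.\<close>
  then have "?u s \<le> 0 * exp ((?N * (?N * R)) * s)"
    using is_trajectoryD(1)[OF y] rate_nonneg
    by (intro gronwall_integral[OF _ _ _ s] continuous_intros) auto
  moreover have "0 \<le> ?u s" by (intro sum_nonneg) auto
  ultimately have "?u s = 0" by simp
  then have "max 0 (- y s $ i) = 0" for i
    using sum_nonneg_eq_0_iff[of UNIV "\<lambda>i. max 0 (- y s $ i)"] by simp
  then have "- y s $ i \<le> 0" for i
    using max.cobounded2[of "- y s $ i" 0] by simp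
  then show ?thesis unfolding orthant_def by simp
qed

end

lemma const_trajectory_component_has_derivative:
  assumes y: "is_trajectory (\<lambda>_. A) x t y" and s: "s \<in> {0..t}"
  shows "((\<lambda>u. y u $ i) has_real_derivative (A *v y s) $ i) (at s within {0..t})"
proof -
  have "continuous_on {0..t} (\<lambda>r. A *v y r)"
    by (rule linear_continuous_on_compose[OF is_trajectoryD(1)[OF y] matrix_vector_mul_linear])
  from integral_has_vector_derivative[OF this s]
  have "((\<lambda>u. x + integral {0..u} (\<lambda>r. A *v y r)) has_vector_derivative A *v y s) (at s within {0..t})"
    by (intro derivative_eq_intros) auto
  then have "(y has_vector_derivative A *v y s) (at s within {0..t})"
    by (rule has_vector_derivative_transform[OF s, rotated]) (use is_trajectoryD(3)[OF y] in auto)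
  then have "((\<lambda>u. y u $ i) has_derivative (\<lambda>h. (h *\<^sub>R (A *v y s)) $ i)) (at s within {0..t})"
    unfolding has_vector_derivative_def by (rule bounded_linear.has_derivative[OF bounded_linear_vec_nth])
  moreover have "(\<lambda>h. (h *\<^sub>R (A *v y s)) $ i) = (*) ((A *v y s) $ i)"
    by (auto simp: mult.commute)
  ultimately show ?thesis
    by (simp add: has_field_derivative_def)
qed

context metzler_system
begin

lemma shifted_mult_component_nonneg:
  assumes A: "A \<in> Ms" and y: "y \<in> orthant"
  shows "0 \<le> R * y $ i + (A *v y) $ i"
    and "j \<noteq> i \<Longrightarrow> A $ i $ j * y $ j \<le> R * y $ i + (A *v y) $ i"
proof -
  have off_diag: "0 \<le> A $ i $ k * y $ k" if "k \<noteq> i" for k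
    using metzler[OF A] that y unfolding metzler_def orthant_def by auto
  have split: "(A *v y) $ i = A $ i $ i * y $ i + (\<Sum>k\<in>UNIV - {i}. A $ i $ k * y $ k)"
    unfolding matrix_vector_mult_def by (simp add: sum.remove[of UNIV i])
  have "- R * y $ i \<le> A $ i $ i * y $ i"
    using abs_entry_le[OF A, of i i] y unfolding orthant_def by (intro mult_right_mono) auto
  moreover have "0 \<le> (\<Sum>k\<in>UNIV - {i}. A $ i $ k * y $ k)"
    using off_diag by (intro sum_nonneg) auto
  ultimately show "0 \<le> R * y $ i + (A *v y) $ i"
    using split by linarith
  assume "j \<noteq> i"
  then have "A $ i $ j * y $ j \<le> (\<Sum>k\<in>UNIV - {i}. A $ i $ k * y $ k)"
    using off_diag by (intro member_le_sum) auto
  with \<open>- R * y $ i \<le> A $ i $ i * y $ i\<close> show "A $ i $ j * y $ j \<le> R * y $ i + (A *v y) $ i"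
    using split by linarith
qed

text \<open>
  The factor \<open>e\<^sup>R\<^sup>t\<close> absorbs the possibly negative diagonal, so along a constant control the
  components of \<open>e\<^sup>R\<^sup>t y(t)\<close> are driven by the nonnegative off-diagonal entries only.
\<close>

lemma exp_scaled_component_mvt:
  assumes A: "A \<in> Ms" and y: "is_trajectory (\<lambda>_. A) x t y" and ab: "0 \<le> a" "a < b" "b \<le> t"
  obtains z where "a < z" "z < b"
    "exp (R * b) * y b $ i - exp (R * a) * y a $ i = (b - a) * (exp (R * z) * (R * y z $ i + (A *v y z) $ i))"
proof -
  define f where "f u = exp (R * u) * y u $ i" for u
  have "continuous_on {a..b} f"
    unfolding f_def using ab by (intro continuous_intros continuous_on_subset[OF is_trajectoryD(1)[OF y]]) auto
  moreover have f': "(f has_real_derivative exp (R * u) * (R * y u $ i + (A *v y u) $ i)) (at u)"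
    if "a < u" "u < b" for u
  proof -
    have "((\<lambda>u. y u $ i) has_real_derivative (A *v y u) $ i) (at u)"
      using const_trajectory_component_has_derivative[OF y, of u i] that ab by (simp add: at_within_Icc_at)
    then have "(f has_real_derivative R * exp (R * u) * y u $ i + exp (R * u) * (A *v y u) $ i) (at u)"
      unfolding f_def by (auto intro!: derivative_eq_intros)
    then show ?thesis by (simp add: algebra_simps)
  qed
  moreover have "f differentiable (at u)" if "a < u" "u < b" for u
    using f'[OF that] unfolding real_differentiable_def by blast
  ultimately obtain l z where z: "a < z" "z < b" "DERIV f z :> l" "f b - f a = (b - a) * l"
    using MVT[OF ab(2)] by blast
  moreover have "l = exp (R * z) * (R * y z $ i + (A *v y z) $ i)"
    using DERIV_unique[OF z(3) f'[OF z(1,2)]] .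
  ultimately show ?thesis
    using that unfolding f_def by blast
qed

lemma exp_scaled_component_mono:
  assumes A: "A \<in> Ms" and y: "is_trajectory (\<lambda>_. A) x t y" and x: "x \<in> orthant"
    and ab: "0 \<le> a" "a \<le> b" "b \<le> t"
  shows "exp (R * a) * y a $ i \<le> exp (R * b) * y b $ i"
proof (cases "a = b")
  case False
  then have "a < b" using ab by simp
  then obtain z where z: "a < z" "z < b"
    "exp (R * b) * y b $ i - exp (R * a) * y a $ i = (b - a) * (exp (R * z) * (R * y z $ i + (A *v y z) $ i))"
    using exp_scaled_component_mvt[OF A y ab(1) _ ab(3)] by blast
  moreover have "y z \<in> orthant"
    using trajectory_nonneg[OF admissible_control_const[OF A] y x] z ab by auto
  then have "0 \<le> (b - a) * (exp (R * z) * (R * y z $ i + (A *v y z) $ i))"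
    using shifted_mult_component_nonneg(1)[OF A] ab by (intro mult_nonneg_nonneg) auto
  then show ?thesis using z(3) by linarith
qed simp

lemma exp_scaled_component_strict_mono:
  assumes A: "A \<in> Ms" and y: "is_trajectory (\<lambda>_. A) x t y" and x: "x \<in> orthant"
    and ab: "0 \<le> a" "a < b" "b \<le> t" and ij: "j \<noteq> i" "0 < A $ i $ j" and y_j: "0 < y a $ j"
  shows "exp (R * a) * y a $ i < exp (R * b) * y b $ i"
proof -
  obtain z where z: "a < z" "z < b"
    "exp (R * b) * y b $ i - exp (R * a) * y a $ i = (b - a) * (exp (R * z) * (R * y z $ i + (A *v y z) $ i))"
    using exp_scaled_component_mvt[OF A y ab] .
  have "0 < exp (R * a) * y a $ j" using y_j by simp
  also have "\<dots> \<le> exp (R * z) * y z $ j"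
    using exp_scaled_component_mono[OF A y x, of a z j] z ab by auto
  finally have "0 < y z $ j" by (simp add: zero_less_mult_iff)
  moreover have "y z \<in> orthant"
    using trajectory_nonneg[OF admissible_control_const[OF A] y x] z ab by auto
  ultimately have "0 < R * y z $ i + (A *v y z) $ i"
    using shifted_mult_component_nonneg(2)[OF A _ ij(1)] mult_pos_pos[OF ij(2)] by force
  then have "0 < (b - a) * (exp (R * z) * (R * y z $ i + (A *v y z) $ i))"
    using ab by simp
  then show ?thesis using z(3) by linarith
qed

end

locale irreducible_metzler_system = metzler_system Ms R for Ms :: "(real^'n^'n) set" and R +
  fixes m\<^sub>0 :: "real^'n^'n"
  assumes irreducible_in: "m\<^sub>0 \<in> Ms" and irreducible: "irreducible_mat m\<^sub>0"
begin

lemma const_trajectory_pos_mono: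
  assumes y: "is_trajectory (\<lambda>_. m\<^sub>0) x t y" and x: "x \<in> orthant"
    and ab: "0 \<le> a" "a \<le> b" "b \<le> t" and pos: "0 < y a $ i"
  shows "0 < y b $ i"
proof -
  have "0 < exp (R * a) * y a $ i" using pos by simp
  also have "\<dots> \<le> exp (R * b) * y b $ i"
    by (rule exp_scaled_component_mono[OF irreducible_in y x ab])
  finally show ?thesis by (simp add: zero_less_mult_iff)
qed

lemma const_trajectory_support_grows:
  assumes y: "is_trajectory (\<lambda>_. m\<^sub>0) x t y" and x: "x \<in> orthant"
    and ab: "0 \<le> a" "a < b" "b \<le> t"
    and proper: "{i. 0 < y a $ i} \<noteq> {}" "{i. 0 < y a $ i} \<noteq> UNIV"
  shows "{i. 0 < y a $ i} \<subset> {i. 0 < y b $ i}"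
proof -
  let ?P = "{i. 0 < y a $ i}"
  have sub: "?P \<subseteq> {i. 0 < y b $ i}"
    using const_trajectory_pos_mono[OF y x ab(1) _ ab(3)] ab(2) by auto
  have "- ?P \<noteq> {}" "- ?P \<noteq> UNIV" using proper by auto
  then have "\<exists>i\<in>- ?P. \<exists>j\<in>- (- ?P). 0 < m\<^sub>0 $ i $ j"
    using irreducible unfolding irreducible_mat_def by (elim allE[of _ "- ?P"]) (simp only: simp_thms)
  then obtain i j where ij: "i \<notin> ?P" "j \<in> ?P" "0 < m\<^sub>0 $ i $ j"
    by auto
  have "0 \<le> exp (R * a) * y a $ i"
    using trajectory_nonneg[OF admissible_control_const[OF irreducible_in] y x] ab
    unfolding orthant_def by auto
  also have "\<dots> < exp (R * b) * y b $ i"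
    using ij by (intro exp_scaled_component_strict_mono[OF irreducible_in y x ab]) auto
  finally have "i \<in> {i. 0 < y b $ i}" by (simp add: zero_less_mult_iff)
  then show ?thesis using sub ij(1) by auto
qed

text \<open>
  The support grows strictly on every interval of length \<open>h\<close> until it is everything, so it is
  everything after \<open>n - 1\<close> such intervals.
\<close>

lemma const_trajectory_support_card:
  assumes y: "is_trajectory (\<lambda>_. m\<^sub>0) x t y" and x: "x \<in> orthant" "x \<noteq> 0"
    and h: "0 < h" and k: "real k * h \<le> t"
  shows "min (k + 1) CARD('n) \<le> card {i. 0 < y (real k * h) $ i}"
  using k
proof (induction k)
  case 0
  have "0 \<le> t" using 0 by simp
  have "{i. 0 < y 0 $ i} \<noteq> {}"
  proof
    assume "{i. 0 < y 0 $ i} = {}"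
    then have "x $ i \<le> 0" for i
      using is_trajectory_at_0[OF y \<open>0 \<le> t\<close>] by (auto simp: not_less)
    moreover have "0 \<le> x $ i" for i using x(1) unfolding orthant_def by simp
    ultimately have "x = 0" by (simp add: vec_eq_iff order_antisym)
    with x(2) show False by simp
  qed
  then show ?case by (simp add: card_gt_0_iff Suc_leI)
next
  case (Suc k)
  let ?P = "\<lambda>u. {i. 0 < y u $ i}"
  have steps: "0 \<le> real k * h" "real k * h < real (Suc k) * h" "real (Suc k) * h \<le> t"
    using h Suc.prems by auto
  then have IH: "min (k + 1) CARD('n) \<le> card (?P (real k * h))" using Suc by simp
  show ?case
  proof (cases "?P (real k * h) = UNIV")
    case True
    then have "?P (real (Suc k) * h) = UNIV"
      using const_trajectory_pos_mono[OF y x(1) steps(1) less_imp_le[OF steps(2)] steps(3)] by auto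
    then show ?thesis by simp
  next
    case False
    moreover have "0 < min (k + 1) CARD('n)" by simp
    then have "0 < card (?P (real k * h))" using IH by linarith
    then have "?P (real k * h) \<noteq> {}" by (metis card.empty less_irrefl)
    ultimately have "?P (real k * h) \<subset> ?P (real (Suc k) * h)"
      by (intro const_trajectory_support_grows[OF y x(1) steps])
    then have "card (?P (real k * h)) < card (?P (real (Suc k) * h))"
      by (intro psubset_card_mono) auto
    then show ?thesis using IH by simp
  qed
qed

lemma const_trajectory_pos:
  assumes y: "is_trajectory (\<lambda>_. m\<^sub>0) x t y" and x: "x \<in> orthant" "x \<noteq> 0"
    and T: "0 < T" "T \<le> t"
  shows "0 < y T $ i"
proof -
  define N where "N = CARD('n)"
  have N: "1 \<le> N" unfolding N_def by (simp add: Suc_leI)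
  define s where "s = real (N - 1) * (T / N)"
  have s: "0 \<le> s" "s \<le> T"
    using T N by (auto simp: s_def field_simps)
  then have "N \<le> card {i. 0 < y s $ i}"
    using const_trajectory_support_card[OF y x, of "T / N" "N - 1"] T N unfolding s_def N_def by simp
  then have "{i. 0 < y s $ i} = UNIV"
    using card_seteq[of UNIV "{i. 0 < y s $ i}"] unfolding N_def by auto
  then show ?thesis
    using const_trajectory_pos_mono[OF y x(1) s(1) s(2) T(2), of i] by auto
qed

end

section \<open>Reachable sets and the coordinate-sum value\<close>

definition coord_sum :: "real^'n \<Rightarrow> real" where
  "coord_sum x = (\<Sum>i\<in>UNIV. x $ i)"

definition one_vec :: "real^'n" where
  "one_vec = (\<chi> i. 1)"

lemma coord_sum_scaleR: "coord_sum (c *\<^sub>R x) = c * coord_sum x"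
  unfolding coord_sum_def by (simp add: sum_distrib_left)

lemma coord_sum_diff: "coord_sum (x - y) = coord_sum x - coord_sum y"
  unfolding coord_sum_def by (simp add: sum_subtractf)

lemma coord_sum_zero [simp]: "coord_sum 0 = 0"
  unfolding coord_sum_def by simp

lemma coord_sum_one_vec: "coord_sum (one_vec :: real^'n) = real CARD('n)"
  unfolding coord_sum_def one_vec_def by simp

lemma coord_sum_le_norm: "coord_sum x \<le> real CARD('n) * norm (x :: real^'n)"
proof -
  have "coord_sum x \<le> (\<Sum>i\<in>(UNIV::'n set). norm x)"
    unfolding coord_sum_def by (rule sum_mono) (metis abs_le_D1 component_le_norm_cart)
  then show ?thesis by simp
qed

lemma orthant_add: "x \<in> orthant \<Longrightarrow> y \<in> orthant \<Longrightarrow> x + y \<in> orthant"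
  unfolding orthant_def by auto

lemma orthant_scaleR: "x \<in> orthant \<Longrightarrow> 0 \<le> c \<Longrightarrow> c *\<^sub>R x \<in> orthant"
  unfolding orthant_def by auto

lemma zero_in_orthant: "0 \<in> orthant"
  unfolding orthant_def by simp

lemma one_vec_in_orthant0: "one_vec \<in> orthant0"
  unfolding orthant0_def orthant_def one_vec_def by (simp add: vec_eq_iff)

lemma one_vec_in_orthant: "one_vec \<in> orthant"
  using one_vec_in_orthant0 unfolding orthant0_def by blast

lemma closed_orthant: "closed orthant"
  unfolding orthant_def by (intro closed_Collect_all closed_Collect_le continuous_intros)

lemma coord_sum_nonneg: "x \<in> orthant \<Longrightarrow> 0 \<le> coord_sum x"
  unfolding coord_sum_def orthant_def by (auto intro: sum_nonneg)

lemma norm_le_coord_sum: "x \<in> orthant \<Longrightarrow> norm x \<le> coord_sum x"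
  using norm_le_l1_cart[of x] unfolding coord_sum_def orthant_def by simp

lemma coord_sum_pos:
  assumes "x \<in> orthant0"
  shows "0 < coord_sum x"
proof -
  have "0 < norm x" using assms unfolding orthant0_def by simp
  also have "\<dots> \<le> coord_sum x" using assms unfolding orthant0_def by (intro norm_le_coord_sum) simp
  finally show ?thesis .
qed

lemma coord_sum_le_card_max: "\<exists>j. coord_sum x \<le> real CARD('n) * (x :: real^'n) $ j"
proof -
  have "Max (range (\<lambda>k. x $ k)) \<in> range (\<lambda>k. x $ k)" by (rule Max_in) auto
  then obtain j where "x $ j = Max (range (\<lambda>k. x $ k))" by (metis rangeE)
  then have "coord_sum x \<le> (\<Sum>k\<in>(UNIV::'n set). x $ j)"
    unfolding coord_sum_def by (intro sum_mono) simp
  then show ?thesis by auto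
qed

lemma dominated_by_one_vec: "y + norm (x - y) *\<^sub>R one_vec - x \<in> orthant"
proof -
  have "x $ i - y $ i \<le> norm (x - y)" for i
    using component_le_norm_cart[of "x - y" i] by simp
  then show ?thesis unfolding orthant_def one_vec_def by (simp add: algebra_simps)
qed

context metzler_system
begin

lemma reachableI:
  "admissible_control Ms t M \<Longrightarrow> is_trajectory M x t y \<Longrightarrow> y t \<in> reachable Ms t x"
  unfolding reachable_def by blast

lemma reachable_nonneg: "z \<in> reachable Ms t x \<Longrightarrow> x \<in> orthant \<Longrightarrow> 0 \<le> t \<Longrightarrow> z \<in> orthant"
  unfolding reachable_def using trajectory_nonneg by fastforce

lemma norm_reachable_le: "z \<in> reachable Ms t x \<Longrightarrow> 0 \<le> t \<Longrightarrow> norm z \<le> norm x * exp (R * t)"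
  unfolding reachable_def using norm_trajectory_le by fastforce

lemma reachable_scaleR:
  assumes "z \<in> reachable Ms t x"
  shows "c *\<^sub>R z \<in> reachable Ms t (c *\<^sub>R x)"
proof -
  from assms obtain M y where "z = y t" "admissible_control Ms t M" "is_trajectory M x t y"
    unfolding reachable_def by blast
  then show ?thesis using reachableI[OF _ is_trajectory_scaleR[of M x t y c]] by simp
qed

text \<open>
  Both directions of the superposition principle: one control drives \<open>a\<close>, \<open>b\<close> and \<open>a + b\<close>
  simultaneously.
\<close>

lemma reachable_add_split:
  assumes "z \<in> reachable Ms t (a + b)"
  obtains z\<^sub>a where "z\<^sub>a \<in> reachable Ms t a" "z - z\<^sub>a \<in> reachable Ms t b"
proof -
  from assms obtain M y where z: "z = y t" and M: "admissible_control Ms t M"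
    and y: "is_trajectory M (a + b) t y" unfolding reachable_def by blast
  obtain y\<^sub>a where y\<^sub>a: "is_trajectory M a t y\<^sub>a" using trajectory_exists[OF M] .
  have "is_trajectory M ((a + b) + (-1) *\<^sub>R a) t (\<lambda>s. y s + (-1) *\<^sub>R y\<^sub>a s)"
    by (rule is_trajectory_add[OF y is_trajectory_scaleR[OF y\<^sub>a]])
  then have "is_trajectory M b t (\<lambda>s. y s - y\<^sub>a s)" by simp
  then have "z - y\<^sub>a t \<in> reachable Ms t b"
    using reachableI[OF M] z by simp
  then show ?thesis
    using that reachableI[OF M y\<^sub>a] by blast
qed

lemma reachable_add_extend:
  assumes "z\<^sub>a \<in> reachable Ms t a"
  obtains z where "z \<in> reachable Ms t (a + b)" "z - z\<^sub>a \<in> reachable Ms t b"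
proof -
  from assms obtain M y where z: "z\<^sub>a = y t" and M: "admissible_control Ms t M"
    and y: "is_trajectory M a t y" unfolding reachable_def by blast
  obtain y\<^sub>b where y\<^sub>b: "is_trajectory M b t y\<^sub>b" using trajectory_exists[OF M] .
  have "y t + y\<^sub>b t \<in> reachable Ms t (a + b)"
    using reachableI[OF M is_trajectory_add[OF y y\<^sub>b]] by simp
  moreover have "(y t + y\<^sub>b t) - z\<^sub>a \<in> reachable Ms t b"
    using reachableI[OF M y\<^sub>b] z by simp
  ultimately show ?thesis by (rule that)
qed

lemma reachable_split_time:
  assumes "z \<in> reachable Ms (s + t) x" "0 \<le> s" "0 \<le> t"
  obtains w where "w \<in> reachable Ms s x" "z \<in> reachable Ms t w"
proof -
  from assms(1) obtain M y where z: "z = y (s + t)" and M: "admissible_control Ms (s + t) M"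
    and y: "is_trajectory M x (s + t) y" unfolding reachable_def by blast
  have "s \<le> s + t" using assms(3) by simp
  then have "y s \<in> reachable Ms s x"
    using reachableI[OF admissible_control_restrict[OF M] is_trajectory_restrict[OF y]] by blast
  moreover have "z \<in> reachable Ms t (y s)"
    using reachableI[OF admissible_control_shift[OF M assms(2)] is_trajectory_shift[OF y assms(2,3)]] z
    by simp
  ultimately show ?thesis by (rule that)
qed

lemma reachable_concat:
  assumes w: "w \<in> reachable Ms s x" and z: "z \<in> reachable Ms t w" and "0 \<le> s" "0 \<le> t"
  shows "z \<in> reachable Ms (s + t) x"
proof -
  from w obtain M\<^sub>1 y\<^sub>1 where w: "w = y\<^sub>1 s" and M\<^sub>1: "admissible_control Ms s M\<^sub>1"
    and y\<^sub>1: "is_trajectory M\<^sub>1 x s y\<^sub>1" unfolding reachable_def by blast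
  from z obtain M\<^sub>2 y\<^sub>2 where z: "z = y\<^sub>2 t" and M\<^sub>2: "admissible_control Ms t M\<^sub>2"
    and y\<^sub>2: "is_trajectory M\<^sub>2 w t y\<^sub>2" unfolding reachable_def by blast
  have "(if s + t \<le> s then y\<^sub>1 (s + t) else y\<^sub>2 (s + t - s)) = z"
    using z w is_trajectory_at_0[OF y\<^sub>2] \<open>0 \<le> t\<close> by auto
  then show ?thesis
    using reachableI[OF admissible_control_glue[OF M\<^sub>1 M\<^sub>2 assms(3,4)]
        is_trajectory_glue[OF y\<^sub>1 y\<^sub>2[unfolded w] assms(3,4)]] by simp
qed

lemma bdd_above_reachable_image:
  assumes "\<And>z. z \<in> orthant \<Longrightarrow> f z \<le> C * norm z" "x \<in> orthant" "0 \<le> t" "0 \<le> C"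
  shows "bdd_above (f ` reachable Ms t x)"
proof (rule bdd_aboveI2)
  fix z assume z: "z \<in> reachable Ms t x"
  have "f z \<le> C * norm z" using assms(1) reachable_nonneg[OF z assms(2,3)] by blast
  also have "\<dots> \<le> C * (norm x * exp (R * t))"
    using norm_reachable_le[OF z assms(3)] assms(4) by (rule mult_left_mono)
  finally show "f z \<le> C * (norm x * exp (R * t))" .
qed

end

context irreducible_metzler_system
begin

lemma reachable_nonempty: "reachable Ms t x \<noteq> {}"
proof -
  obtain y where "is_trajectory (\<lambda>_. m\<^sub>0) x t y"
    using trajectory_exists[OF admissible_control_const[OF irreducible_in]] .
  then show ?thesis using reachableI[OF admissible_control_const[OF irreducible_in]] by blast
qed

lemma reachable_at_0: "reachable Ms 0 x = {x}"
  using reachable_nonempty[of 0 x] is_trajectory_at_0 unfolding reachable_def by fastforce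

lemma value_fun_upper:
  "bdd_above (f ` reachable Ms t x) \<Longrightarrow> z \<in> reachable Ms t x \<Longrightarrow> f z \<le> value_fun f Ms t x"
  unfolding value_fun_def by (intro cSup_upper) auto

lemma value_fun_least:
  "(\<And>z. z \<in> reachable Ms t x \<Longrightarrow> f z \<le> b) \<Longrightarrow> value_fun f Ms t x \<le> b"
  unfolding value_fun_def using reachable_nonempty by (intro cSup_least) auto

abbreviation sum_value :: "real \<Rightarrow> real^'n \<Rightarrow> real" where
  "sum_value t x \<equiv> value_fun coord_sum Ms t x"

lemma sum_value_upper:
  "x \<in> orthant \<Longrightarrow> 0 \<le> t \<Longrightarrow> z \<in> reachable Ms t x \<Longrightarrow> coord_sum z \<le> sum_value t x"
  by (intro value_fun_upper bdd_above_reachable_image[of _ "real CARD('n)"])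
     (auto intro: coord_sum_le_norm)

lemma sum_value_nonneg: "x \<in> orthant \<Longrightarrow> 0 \<le> t \<Longrightarrow> 0 \<le> sum_value t x"
  using reachable_nonempty[of t x] coord_sum_nonneg[OF reachable_nonneg] sum_value_upper
  by (meson all_not_in_conv order.trans)

lemma sum_value_zero:
  assumes t: "0 \<le> t"
  shows "sum_value t 0 = 0"
proof (rule antisym)
  show "sum_value t 0 \<le> 0"
  proof (rule value_fun_least)
    fix z assume "z \<in> reachable Ms t 0"
    then have "z = 0" using norm_reachable_le[of z t 0] t by simp
    then show "coord_sum z \<le> 0" by simp
  qed
qed (rule sum_value_nonneg[OF zero_in_orthant t])

lemma sum_value_at_0: "sum_value 0 x = coord_sum x"
  unfolding value_fun_def reachable_at_0 by simp

lemma sum_value_mono: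
  assumes t: "0 \<le> t" and x: "x \<in> orthant" and xy: "x - y \<in> orthant"
  shows "sum_value t y \<le> sum_value t x"
proof (rule value_fun_least)
  fix z assume "z \<in> reachable Ms t y"
  then obtain z' where z': "z' \<in> reachable Ms t (y + (x - y))" "z' - z \<in> reachable Ms t (x - y)"
    by (rule reachable_add_extend)
  have "coord_sum z \<le> coord_sum z'"
    using coord_sum_nonneg[OF reachable_nonneg[OF z'(2) xy t]] by (simp add: coord_sum_diff)
  also have "\<dots> \<le> sum_value t x" using sum_value_upper[OF x t] z'(1) by simp
  finally show "coord_sum z \<le> sum_value t x" .
qed

lemma sum_value_scaleR:
  assumes t: "0 \<le> t" and x: "x \<in> orthant" and c: "0 < c"
  shows "sum_value t (c *\<^sub>R x) = c * sum_value t x"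
proof (rule antisym)
  show "sum_value t (c *\<^sub>R x) \<le> c * sum_value t x"
  proof (rule value_fun_least)
    fix z assume "z \<in> reachable Ms t (c *\<^sub>R x)"
    then have "(1 / c) *\<^sub>R z \<in> reachable Ms t x"
      using reachable_scaleR[of z t "c *\<^sub>R x" "1 / c"] c by simp
    then show "coord_sum z \<le> c * sum_value t x"
      using sum_value_upper[OF x t] c by (fastforce simp: coord_sum_scaleR field_simps)
  qed
  have "sum_value t x \<le> sum_value t (c *\<^sub>R x) / c"
  proof (rule value_fun_least)
    fix z assume "z \<in> reachable Ms t x"
    then have "coord_sum (c *\<^sub>R z) \<le> sum_value t (c *\<^sub>R x)"
      using c by (intro sum_value_upper[OF orthant_scaleR[OF x] t] reachable_scaleR) auto
    then show "coord_sum z \<le> sum_value t (c *\<^sub>R x) / c"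
      using c by (simp add: coord_sum_scaleR field_simps)
  qed
  then show "c * sum_value t x \<le> sum_value t (c *\<^sub>R x)" using c by (simp add: field_simps)
qed

lemma sum_value_subadditive:
  assumes t: "0 \<le> t" and x: "x \<in> orthant" and y: "y \<in> orthant"
  shows "sum_value t (x + y) \<le> sum_value t x + sum_value t y"
proof (rule value_fun_least)
  fix z assume "z \<in> reachable Ms t (x + y)"
  then obtain z\<^sub>x where "z\<^sub>x \<in> reachable Ms t x" "z - z\<^sub>x \<in> reachable Ms t y"
    by (rule reachable_add_split)
  then show "coord_sum z \<le> sum_value t x + sum_value t y"
    using sum_value_upper[OF x t] sum_value_upper[OF y t] by (fastforce simp: coord_sum_diff)
qed

lemma sum_value_concat:
  assumes s: "0 \<le> s" and t: "0 \<le> t" and x: "x \<in> orthant" and w: "w \<in> reachable Ms s x"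
  shows "sum_value t w \<le> sum_value (s + t) x"
  using reachable_concat[OF w _ s t] sum_value_upper[OF x] s t by (intro value_fun_least) simp

lemma sum_value_split_time:
  assumes s: "0 \<le> s" and t: "0 \<le> t" and x: "x \<in> orthant" and z: "z \<in> reachable Ms (s + t) x"
  obtains w where "w \<in> reachable Ms s x" "coord_sum z \<le> sum_value t w"
proof -
  obtain w where w: "w \<in> reachable Ms s x" "z \<in> reachable Ms t w"
    using reachable_split_time[OF z s t] .
  then show ?thesis
    using that sum_value_upper[OF reachable_nonneg[OF w(1) x s] t] by blast
qed

definition growth :: "real \<Rightarrow> real" where
  "growth t = sum_value t one_vec"

lemma growth_nonneg: "0 \<le> t \<Longrightarrow> 0 \<le> growth t"
  unfolding growth_def by (rule sum_value_nonneg[OF one_vec_in_orthant])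

lemma sum_value_scaleR_one_vec: "0 \<le> t \<Longrightarrow> 0 \<le> c \<Longrightarrow> sum_value t (c *\<^sub>R one_vec) = c * growth t"
  unfolding growth_def using sum_value_zero sum_value_scaleR[OF _ one_vec_in_orthant]
  by (cases "c = 0") auto

lemma sum_value_le_growth:
  assumes t: "0 \<le> t" and x: "x \<in> orthant"
  shows "sum_value t x \<le> norm x * growth t"
proof -
  have "norm x *\<^sub>R one_vec \<in> orthant" by (intro orthant_scaleR one_vec_in_orthant) simp
  then have "sum_value t x \<le> sum_value t (norm x *\<^sub>R one_vec)"
    using sum_value_mono[OF t _ dominated_by_one_vec[of 0 x]] by simp
  then show ?thesis using sum_value_scaleR_one_vec[OF t] by simp
qed

lemma growth_submult:
  assumes s: "0 \<le> s" and t: "0 \<le> t"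
  shows "growth (s + t) \<le> growth s * growth t"
  unfolding growth_def[of "s + t"]
proof (rule value_fun_least)
  fix z assume "z \<in> reachable Ms (s + t) one_vec"
  then obtain w where w: "w \<in> reachable Ms s one_vec" "coord_sum z \<le> sum_value t w"
    by (rule sum_value_split_time[OF s t one_vec_in_orthant])
  have w_nonneg: "w \<in> orthant" by (rule reachable_nonneg[OF w(1) one_vec_in_orthant s])
  have "sum_value t w \<le> norm w * growth t" by (rule sum_value_le_growth[OF t w_nonneg])
  also have "\<dots> \<le> coord_sum w * growth t"
    by (intro mult_right_mono norm_le_coord_sum[OF w_nonneg] growth_nonneg[OF t])
  also have "\<dots> \<le> growth s * growth t"
    unfolding growth_def
    by (intro mult_right_mono sum_value_upper[OF one_vec_in_orthant s w(1)] growth_nonneg[OF t, unfolded growth_def])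
  finally show "coord_sum z \<le> growth s * growth t" using w(2) by simp
qed

lemma growth_pos:
  assumes t: "0 \<le> t"
  shows "0 < growth t"
proof (cases "t = 0")
  case True
  then show ?thesis by (simp add: growth_def sum_value_at_0 coord_sum_one_vec)
next
  case False
  obtain y where y: "is_trajectory (\<lambda>_. m\<^sub>0) one_vec t y"
    using trajectory_exists[OF admissible_control_const[OF irreducible_in]] .
  have "0 < coord_sum (y t)"
    unfolding coord_sum_def using one_vec_in_orthant0 False t
    by (intro sum_pos const_trajectory_pos[OF y]) (auto simp: orthant0_def)
  also have "\<dots> \<le> growth t"
    unfolding growth_def
    by (rule sum_value_upper[OF one_vec_in_orthant t reachableI[OF admissible_control_const[OF irreducible_in] y]])
  finally show ?thesis .
qed

end

context irreducible_metzler_system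
begin

lemma reachable_dominates_axis_trajectory:
  assumes x: "x \<in> orthant" and Y: "is_trajectory (\<lambda>_. m\<^sub>0) (axis j 1) 1 Y"
  obtains p where "p \<in> reachable Ms 1 x" "\<And>i. x $ j * Y 1 $ i \<le> p $ i"
proof -
  define r where "r = x - x $ j *\<^sub>R axis j 1"
  have r: "r \<in> orthant" using x unfolding r_def orthant_def by (auto simp: axis_def)
  obtain y\<^sub>r where y\<^sub>r: "is_trajectory (\<lambda>_. m\<^sub>0) r 1 y\<^sub>r"
    using trajectory_exists[OF admissible_control_const[OF irreducible_in]] .
  have "is_trajectory (\<lambda>_. m\<^sub>0) x 1 (\<lambda>s. x $ j *\<^sub>R Y s + y\<^sub>r s)"
    using is_trajectory_add[OF is_trajectory_scaleR[OF Y, of "x $ j"] y\<^sub>r] unfolding r_def by simp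
  then have "x $ j *\<^sub>R Y 1 + y\<^sub>r 1 \<in> reachable Ms 1 x"
    using reachableI[OF admissible_control_const[OF irreducible_in]] by fastforce
  moreover have "y\<^sub>r 1 \<in> orthant"
    by (rule trajectory_nonneg[OF admissible_control_const[OF irreducible_in] y\<^sub>r r]) simp
  then have "x $ j * Y 1 $ i \<le> (x $ j *\<^sub>R Y 1 + y\<^sub>r 1) $ i" for i
    unfolding orthant_def by simp
  ultimately show ?thesis by (rule that)
qed

text \<open>
  Harnack inequality: the constant control \<open>m\<^sub>0\<close> takes every coordinate direction to a point
  with positive entries, and every \<open>x\<close> dominates \<open>(\<Sigma>\<^sub>i x\<^sub>i / n)\<close> times its largest direction.
\<close>

lemma harnack_exists:
  "\<exists>\<delta>>0. \<forall>x\<in>orthant. \<exists>p\<in>reachable Ms 1 x. \<forall>i. \<delta> * coord_sum x \<le> p $ i"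
proof -
  have "\<forall>j. \<exists>y. is_trajectory (\<lambda>_. m\<^sub>0) (axis j 1) 1 y"
    using trajectory_exists[OF admissible_control_const[OF irreducible_in]] by metis
  then obtain Y where Y: "\<And>j. is_trajectory (\<lambda>_. m\<^sub>0) (axis j 1) 1 (Y j)" by metis
  have "axis j (1::real) \<in> orthant" for j :: 'n unfolding orthant_def axis_def by simp
  then have "0 < Y j 1 $ i" for i j
    by (intro const_trajectory_pos[OF Y]) (auto simp: axis_eq_0_iff)
  then have d: "0 < Min ((\<lambda>(i, j). Y j 1 $ i) ` UNIV)" by (subst Min_gr_iff) auto
  let ?\<delta> = "Min ((\<lambda>(i, j). Y j 1 $ i) ` UNIV) / real CARD('n)"
  have \<delta>: "0 < ?\<delta>" using d by simp
  have "\<exists>p\<in>reachable Ms 1 x. \<forall>i. ?\<delta> * coord_sum x \<le> p $ i" if x: "x \<in> orthant" for x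
  proof -
    obtain j where j: "coord_sum x \<le> real CARD('n) * x $ j"
      using coord_sum_le_card_max by blast
    obtain p where p: "p \<in> reachable Ms 1 x" "\<And>i. x $ j * Y j 1 $ i \<le> p $ i"
      using reachable_dominates_axis_trajectory[OF x Y[of j]] by blast
    have "?\<delta> * coord_sum x \<le> x $ j * Y j 1 $ i" for i
    proof -
      have "?\<delta> * coord_sum x \<le> ?\<delta> * (real CARD('n) * x $ j)"
        using j \<delta> by (intro mult_left_mono) auto
      also have "\<dots> = x $ j * Min ((\<lambda>(i, j). Y j 1 $ i) ` UNIV)" by simp
      also have "\<dots> \<le> x $ j * Y j 1 $ i"
        using x unfolding orthant_def by (intro mult_left_mono Min_le) auto
      finally show ?thesis .
    qed
    with p show ?thesis using order.trans by blast
  qed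
  then show ?thesis using \<delta> by blast
qed

definition harnack_const :: real where
  "harnack_const = (SOME \<delta>. 0 < \<delta> \<and> (\<forall>x\<in>orthant. \<exists>p\<in>reachable Ms 1 x. \<forall>i. \<delta> * coord_sum x \<le> p $ i))"

lemma harnack_const_pos: "0 < harnack_const"
  and harnack_point:
    "x \<in> orthant \<Longrightarrow> \<exists>p\<in>reachable Ms 1 x. \<forall>i. harnack_const * coord_sum x \<le> p $ i"
  using someI_ex[OF harnack_exists] unfolding harnack_const_def[symmetric] by blast+

lemma harnack_sum_value:
  assumes t: "0 \<le> t" and x: "x \<in> orthant"
  shows "harnack_const * coord_sum x * growth t \<le> sum_value (1 + t) x"
proof -
  obtain p where p: "p \<in> reachable Ms 1 x" "\<And>i. harnack_const * coord_sum x \<le> p $ i"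
    using harnack_point[OF x] by blast
  let ?c = "harnack_const * coord_sum x"
  have c: "0 \<le> ?c" using harnack_const_pos coord_sum_nonneg[OF x] by simp
  have "?c * growth t = sum_value t (?c *\<^sub>R one_vec)"
    by (rule sum_value_scaleR_one_vec[OF t c, symmetric])
  also have "\<dots> \<le> sum_value t p"
    using p(2) by (intro sum_value_mono[OF t reachable_nonneg[OF p(1) x]]) (auto simp: orthant_def one_vec_def)
  also have "\<dots> \<le> sum_value (1 + t) x"
    by (rule sum_value_concat[OF _ t x p(1)]) simp
  finally show ?thesis .
qed

lemma growth_supermult:
  assumes s: "0 \<le> s" and t: "0 \<le> t"
  shows "harnack_const * growth s * growth t \<le> growth (s + (1 + t))"
proof -
  have "growth s \<le> growth (s + (1 + t)) / (harnack_const * growth t)"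
    unfolding growth_def[of s]
  proof (rule value_fun_least)
    fix w assume w: "w \<in> reachable Ms s one_vec"
    have "harnack_const * coord_sum w * growth t \<le> sum_value (1 + t) w"
      by (rule harnack_sum_value[OF t reachable_nonneg[OF w one_vec_in_orthant s]])
    also have "\<dots> \<le> growth (s + (1 + t))"
      unfolding growth_def using t by (intro sum_value_concat[OF s _ one_vec_in_orthant w]) simp
    finally show "coord_sum w \<le> growth (s + (1 + t)) / (harnack_const * growth t)"
      using harnack_const_pos growth_pos[OF t] by (simp add: field_simps)
  qed
  then show ?thesis using harnack_const_pos growth_pos[OF t] by (simp add: field_simps)
qed

end

section \<open>Functions that are additive up to bounded errors\<close>

text \<open>A two-sided form of Fekete's subadditivity lemma.\<close>

context
  fixes f :: "real \<Rightarrow> real" and c C :: real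
  assumes subadditive: "\<And>s t. 0 \<le> s \<Longrightarrow> 0 \<le> t \<Longrightarrow> f (s + t) \<le> f s + f t"
    and superadditive: "\<And>s t. 0 \<le> s \<Longrightarrow> 0 \<le> t \<Longrightarrow> c + f s + f t \<le> f (s + (1 + t))"
    and bounded: "\<And>t. t \<in> {0..1} \<Longrightarrow> \<bar>f t\<bar> \<le> C"
begin

lemma subadditive_mult: "1 \<le> n \<Longrightarrow> 0 \<le> r \<Longrightarrow> f (real n * r) \<le> real n * f r"
proof (induction n rule: dec_induct)
  case (step n)
  have "f (real (Suc n) * r) \<le> f (real n * r) + f r"
    using subadditive[of "real n * r" r] step by (simp add: algebra_simps)
  with step show ?case by (simp add: algebra_simps)
qed simp

lemma superadditive_mult:
  "1 \<le> n \<Longrightarrow> real n * (c + f (real m)) \<le> c + f (real (n * (m + 1) - 1))"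
proof (induction n rule: dec_induct)
  case (step n)
  have "real (n * (m + 1) - 1) + (1 + real m) = real (Suc n * (m + 1) - 1)"
    using step by (simp add: of_nat_diff algebra_simps)
  then have "c + f (real (n * (m + 1) - 1)) + f (real m) \<le> f (real (Suc n * (m + 1) - 1))"
    using superadditive[of "real (n * (m + 1) - 1)" "real m"] by (simp only:)
  with step show ?case by (simp add: algebra_simps)
qed simp

lemma superadditive_ratio_le:
  assumes k: "1 \<le> k"
  shows "(c + f (real m)) / (real m + 1) \<le> f (real k) / real k"
proof -
  have "0 \<le> f 0" using subadditive[of 0 0] by simp
  then have "c + f (real j) \<le> f (real j + 1)" for j
    using superadditive[of "real j" 0] by simp
  then have "real k * (c + f (real m)) \<le> f (real (k * (m + 1) - 1) + 1)"
    using superadditive_mult[OF k, of m] order.trans by blast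
  also have "real (k * (m + 1) - 1) + 1 = real (m + 1) * real k"
    using k by (simp add: of_nat_diff algebra_simps)
  also have "f (real (m + 1) * real k) \<le> real (m + 1) * f (real k)"
    by (rule subadditive_mult) auto
  finally show ?thesis using k by (simp add: field_simps)
qed

lemma approximately_linear:
  obtains \<Lambda> K where "\<And>t. 0 \<le> t \<Longrightarrow> \<bar>f t - \<Lambda> * t\<bar> \<le> K"
proof -
  define \<Lambda> where "\<Lambda> = (SUP m. (c + f (real m)) / (real m + 1))"
  have bdd: "bdd_above (range (\<lambda>m. (c + f (real m)) / (real m + 1)))"
    using superadditive_ratio_le[of 1] by (intro bdd_aboveI2) auto
  have above: "c + f (real m) \<le> \<Lambda> * (real m + 1)" for m
    using cSUP_upper[OF _ bdd, of m] unfolding \<Lambda>_def by (simp add: field_simps)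
  have below: "\<Lambda> * real k \<le> f (real k)" if k: "1 \<le> k" for k
  proof -
    have "\<Lambda> \<le> f (real k) / real k"
      unfolding \<Lambda>_def by (rule cSUP_least) (auto intro: superadditive_ratio_le[OF k])
    then show ?thesis using k by (simp add: field_simps)
  qed
  have "\<bar>f t - \<Lambda> * t\<bar> \<le> \<bar>\<Lambda>\<bar> + \<bar>c\<bar> + C" if t: "0 \<le> t" for t
  proof -
    define m where "m = nat \<lfloor>t\<rfloor>"
    have m: "real m \<le> t" "t < real m + 1"
      unfolding m_def using t by linarith+
    have "\<bar>\<Lambda> * (real m + 1) - \<Lambda> * t\<bar> = \<bar>\<Lambda>\<bar> * (real m + 1 - t)"
      using m by (simp add: abs_mult flip: right_diff_distrib)
    also have "\<dots> \<le> \<bar>\<Lambda>\<bar>" using m by (intro mult_left_le) auto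
    finally have "\<Lambda> * (real m + 1) - \<Lambda> * t \<le> \<bar>\<Lambda>\<bar>" "\<Lambda> * t - \<Lambda> * (real m + 1) \<le> \<bar>\<Lambda>\<bar>"
      by (simp_all add: abs_le_iff)
    moreover have "f t \<le> f (real m) + C"
      using subadditive[of "real m" "t - real m"] bounded[of "t - real m"] m by auto
    moreover have "f (real m + 1) \<le> f t + C"
      using subadditive[of t "real m + 1 - t"] bounded[of "real m + 1 - t"] m t by auto
    moreover have "\<Lambda> * (real m + 1) \<le> f (real m + 1)"
      using below[of "Suc m"] by (simp add: add.commute)
    moreover have "- c \<le> \<bar>c\<bar>" by simp
    ultimately show ?thesis
      using above[of m] unfolding abs_le_iff by linarith
  qed
  then show ?thesis by (rule that)
qed

end

section \<open>Exponential growth rate\<close>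

context irreducible_metzler_system
begin

lemma log_growth_bounded_01: "\<exists>C. \<forall>t\<in>{0..1}. \<bar>ln (growth t)\<bar> \<le> C"
proof -
  define U where "U = ln (real CARD('n) * norm (one_vec :: real^'n) * exp R)"
  have upper: "ln (growth t) \<le> U" if t: "t \<in> {0..1}" for t
  proof -
    have "growth t \<le> real CARD('n) * norm (one_vec :: real^'n) * exp R"
      unfolding growth_def
    proof (rule value_fun_least)
      fix z assume z: "z \<in> reachable Ms t one_vec"
      have "coord_sum z \<le> real CARD('n) * norm z" by (rule coord_sum_le_norm)
      also have "\<dots> \<le> real CARD('n) * (norm (one_vec :: real^'n) * exp (R * t))"
        using norm_reachable_le[OF z] t by (intro mult_left_mono) auto
      also have "\<dots> \<le> real CARD('n) * (norm (one_vec :: real^'n) * exp R)"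
        using t rate_nonneg by (intro mult_left_mono) (auto simp: mult_left_le)
      finally show "coord_sum z \<le> real CARD('n) * norm (one_vec :: real^'n) * exp R"
        by (simp add: mult_ac)
    qed
    then show ?thesis unfolding U_def using growth_pos[of t] t by simp
  qed
  have "ln (growth 1) \<le> ln (growth t) + ln (growth (1 - t))" if t: "t \<in> {0..1}" for t
  proof -
    have "ln (growth 1) \<le> ln (growth t * growth (1 - t))"
      using growth_submult[of t "1 - t"] growth_pos[of t] growth_pos[of "1 - t"] growth_pos[of 1] t
      by simp
    then show ?thesis using growth_pos[of t] growth_pos[of "1 - t"] t by (simp add: ln_mult)
  qed
  moreover have "U \<le> \<bar>U\<bar>" "- \<bar>ln (growth 1)\<bar> \<le> ln (growth 1)" by simp_all
  ultimately have "\<bar>ln (growth t)\<bar> \<le> \<bar>U\<bar> + \<bar>ln (growth 1)\<bar>" if "t \<in> {0..1}" for t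
    using upper[OF that] upper[of "1 - t"] that unfolding abs_le_iff by force
  then show ?thesis by blast
qed

lemma log_growth_approximately_linear: "\<exists>\<Lambda> K. \<forall>t\<ge>0. \<bar>ln (growth t) - \<Lambda> * t\<bar> \<le> K"
proof -
  obtain C where C: "\<And>t. t \<in> {0..1} \<Longrightarrow> \<bar>ln (growth t)\<bar> \<le> C"
    using log_growth_bounded_01 by blast
  have "ln (growth (s + t)) \<le> ln (growth s) + ln (growth t)" if "0 \<le> s" "0 \<le> t" for s t
  proof -
    have "ln (growth (s + t)) \<le> ln (growth s * growth t)"
      using growth_submult[OF that] growth_pos[of s] growth_pos[of t] growth_pos[of "s + t"] that by simp
    then show ?thesis using growth_pos[of s] growth_pos[of t] that by (simp add: ln_mult)
  qed
  moreover have "ln harnack_const + ln (growth s) + ln (growth t) \<le> ln (growth (s + (1 + t)))"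
    if "0 \<le> s" "0 \<le> t" for s t
  proof -
    have "ln (harnack_const * growth s * growth t) \<le> ln (growth (s + (1 + t)))"
      using growth_supermult[OF that] growth_pos[of s] growth_pos[of t] growth_pos[of "s + (1 + t)"]
        harnack_const_pos that by simp
    then show ?thesis using growth_pos[of s] growth_pos[of t] harnack_const_pos that by (simp add: ln_mult)
  qed
  ultimately obtain \<Lambda> K where "\<And>t. 0 \<le> t \<Longrightarrow> \<bar>ln (growth t) - \<Lambda> * t\<bar> \<le> K"
    using approximately_linear[of "\<lambda>t. ln (growth t)" "ln harnack_const" C] C by blast
  then show ?thesis by blast
qed

definition growth_rate :: real where
  "growth_rate = (SOME \<Lambda>. \<exists>K. \<forall>t\<ge>0. \<bar>ln (growth t) - \<Lambda> * t\<bar> \<le> K)"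

definition growth_error :: real where
  "growth_error = (SOME K. \<forall>t\<ge>0. \<bar>ln (growth t) - growth_rate * t\<bar> \<le> K)"

lemma growth_bounds:
  assumes t: "0 \<le> t"
  shows "exp (growth_rate * t - growth_error) \<le> growth t"
    and "growth t \<le> exp (growth_rate * t + growth_error)"
proof -
  have "\<exists>K. \<forall>t\<ge>0. \<bar>ln (growth t) - growth_rate * t\<bar> \<le> K"
    using someI_ex[OF log_growth_approximately_linear] unfolding growth_rate_def .
  from someI_ex[OF this] t have "\<bar>ln (growth t) - growth_rate * t\<bar> \<le> growth_error"
    unfolding growth_error_def by blast
  then have "growth_rate * t - growth_error \<le> ln (growth t)" "ln (growth t) \<le> growth_rate * t + growth_error"
    by (simp_all add: abs_le_iff)
  moreover have "growth t = exp (ln (growth t))" using growth_pos[OF t] by simp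
  ultimately show "exp (growth_rate * t - growth_error) \<le> growth t"
    and "growth t \<le> exp (growth_rate * t + growth_error)"
    by (metis exp_le_cancel_iff)+
qed

lemma sum_value_le_exp:
  assumes t: "0 \<le> t" and x: "x \<in> orthant"
  shows "sum_value t x \<le> norm x * exp (growth_rate * t + growth_error)"
  using sum_value_le_growth[OF t x] mult_left_mono[OF growth_bounds(2)[OF t] norm_ge_zero[of x]]
  by linarith

lemma sum_value_ge_exp:
  assumes t: "1 \<le> t" and x: "x \<in> orthant"
  shows "harnack_const * coord_sum x * exp (growth_rate * (t - 1) - growth_error) \<le> sum_value t x"
proof -
  have "harnack_const * coord_sum x * exp (growth_rate * (t - 1) - growth_error)
      \<le> harnack_const * coord_sum x * growth (t - 1)"
    using growth_bounds(1)[of "t - 1"] harnack_const_pos coord_sum_nonneg[OF x] t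
    by (intro mult_left_mono) auto
  also have "\<dots> \<le> sum_value t x"
    using harnack_sum_value[of "t - 1" x] t x by simp
  finally show ?thesis .
qed

end

section \<open>The eigenfunction\<close>

context irreducible_metzler_system
begin

definition normalized_value :: "real \<Rightarrow> real^'n \<Rightarrow> real" where
  "normalized_value t x = exp (- (growth_rate * t)) * sum_value t x"

lemma normalized_value_le:
  assumes t: "0 \<le> t" and x: "x \<in> orthant"
  shows "normalized_value t x \<le> exp growth_error * norm x"
proof -
  have "normalized_value t x \<le> exp (- (growth_rate * t)) * (norm x * exp (growth_rate * t + growth_error))"
    unfolding normalized_value_def using sum_value_le_exp[OF t x] by (intro mult_left_mono) auto
  also have "\<dots> = exp growth_error * norm x" by (simp add: exp_add[symmetric] mult_ac)
  finally show ?thesis .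
qed

lemma normalized_value_ge:
  assumes t: "1 \<le> t" and x: "x \<in> orthant"
  shows "harnack_const * exp (- growth_rate - growth_error) * coord_sum x \<le> normalized_value t x"
proof -
  have "exp (- (growth_rate * t)) * (harnack_const * coord_sum x * exp (growth_rate * (t - 1) - growth_error))
      \<le> normalized_value t x"
    unfolding normalized_value_def using sum_value_ge_exp[OF t x] by (intro mult_left_mono) auto
  moreover have "exp (- (growth_rate * t)) * (harnack_const * coord_sum x * exp (growth_rate * (t - 1) - growth_error))
      = harnack_const * exp (- growth_rate - growth_error) * coord_sum x"
    by (simp add: mult_ac exp_add[symmetric] algebra_simps)
  ultimately show ?thesis by simp
qed

lemma normalized_value_lipschitz:
  assumes t: "0 \<le> t" and x: "x \<in> orthant" and y: "y \<in> orthant"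
  shows "normalized_value t x \<le> normalized_value t y + exp growth_error * norm (x - y)"
proof -
  let ?d = "norm (x - y)"
  have d: "?d *\<^sub>R one_vec \<in> orthant" by (intro orthant_scaleR one_vec_in_orthant) simp
  have "sum_value t x \<le> sum_value t (y + ?d *\<^sub>R one_vec)"
    by (rule sum_value_mono[OF t orthant_add[OF y d] dominated_by_one_vec])
  also have "\<dots> \<le> sum_value t y + ?d * growth t"
    using sum_value_subadditive[OF t y d] sum_value_scaleR_one_vec[OF t] by simp
  also have "?d * growth t \<le> ?d * exp (growth_rate * t + growth_error)"
    using growth_bounds(2)[OF t] by (intro mult_left_mono) auto
  finally have "exp (- (growth_rate * t)) * sum_value t x
      \<le> exp (- (growth_rate * t)) * (sum_value t y + ?d * exp (growth_rate * t + growth_error))"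
    by (intro mult_left_mono) auto
  then show ?thesis
    unfolding normalized_value_def by (simp add: algebra_simps exp_add[symmetric])
qed

lemma normalized_value_scaleR:
  "0 \<le> t \<Longrightarrow> x \<in> orthant \<Longrightarrow> 0 < c \<Longrightarrow> normalized_value t (c *\<^sub>R x) = c * normalized_value t x"
  unfolding normalized_value_def using sum_value_scaleR by simp

lemma normalized_value_concat:
  assumes s: "0 \<le> s" and t: "0 \<le> t" and x: "x \<in> orthant" and z: "z \<in> reachable Ms s x"
  shows "normalized_value t z \<le> exp (growth_rate * s) * normalized_value (s + t) x"
proof -
  have "exp (- (growth_rate * t)) * sum_value t z \<le> exp (- (growth_rate * t)) * sum_value (s + t) x"
    using sum_value_concat[OF s t x z] by (intro mult_left_mono) auto
  also have "\<dots> = exp (growth_rate * s) * (exp (- (growth_rate * (s + t))) * sum_value (s + t) x)"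
    by (simp add: exp_add[symmetric] algebra_simps)
  finally show ?thesis unfolding normalized_value_def .
qed

definition tail_sup :: "real \<Rightarrow> real^'n \<Rightarrow> real" where
  "tail_sup T x = (SUP t\<in>{T..}. normalized_value t x)"

definition eigenfunction :: "real^'n \<Rightarrow> real" where
  "eigenfunction x = (INF T\<in>{1..}. tail_sup T x)"

lemma tail_sup_ge: "0 \<le> T \<Longrightarrow> T \<le> t \<Longrightarrow> x \<in> orthant \<Longrightarrow> normalized_value t x \<le> tail_sup T x"
  unfolding tail_sup_def
  by (rule cSUP_upper) (auto intro!: bdd_aboveI2[of _ _ "exp growth_error * norm x"] normalized_value_le)

lemma tail_sup_least: "(\<And>t. T \<le> t \<Longrightarrow> normalized_value t x \<le> b) \<Longrightarrow> tail_sup T x \<le> b"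
  unfolding tail_sup_def by (rule cSUP_least) auto

lemma tail_sup_ge_coord_sum:
  "1 \<le> T \<Longrightarrow> x \<in> orthant \<Longrightarrow> harnack_const * exp (- growth_rate - growth_error) * coord_sum x \<le> tail_sup T x"
  using normalized_value_ge[of T x] tail_sup_ge[of T T x] by simp

lemma tail_sup_antimono: "0 \<le> T \<Longrightarrow> T \<le> T' \<Longrightarrow> x \<in> orthant \<Longrightarrow> tail_sup T' x \<le> tail_sup T x"
  by (rule tail_sup_least) (auto intro: tail_sup_ge)

lemma tail_sup_lipschitz:
  assumes T: "0 \<le> T" and x: "x \<in> orthant" and y: "y \<in> orthant"
  shows "tail_sup T x \<le> tail_sup T y + exp growth_error * norm (x - y)"
proof (rule tail_sup_least)
  fix t assume t: "T \<le> t"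
  have "normalized_value t x \<le> normalized_value t y + exp growth_error * norm (x - y)"
    using normalized_value_lipschitz[of t x y] T t x y by simp
  also have "normalized_value t y \<le> tail_sup T y" by (rule tail_sup_ge[OF T t y])
  finally show "normalized_value t x \<le> tail_sup T y + exp growth_error * norm (x - y)" by simp
qed

lemma tail_sup_scaleR:
  assumes T: "0 \<le> T" and x: "x \<in> orthant" and c: "0 < c"
  shows "tail_sup T (c *\<^sub>R x) = c * tail_sup T x"
proof (rule antisym)
  show "tail_sup T (c *\<^sub>R x) \<le> c * tail_sup T x"
  proof (rule tail_sup_least)
    fix t assume t: "T \<le> t"
    have "normalized_value t (c *\<^sub>R x) = c * normalized_value t x"
      using normalized_value_scaleR[OF _ x c] T t by simp
    also have "\<dots> \<le> c * tail_sup T x" using tail_sup_ge[OF T t x] c by simp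
    finally show "normalized_value t (c *\<^sub>R x) \<le> c * tail_sup T x" .
  qed
  have "tail_sup T x \<le> tail_sup T (c *\<^sub>R x) / c"
  proof (rule tail_sup_least)
    fix t assume t: "T \<le> t"
    have "c * normalized_value t x = normalized_value t (c *\<^sub>R x)"
      using normalized_value_scaleR[OF _ x c] T t by simp
    also have "\<dots> \<le> tail_sup T (c *\<^sub>R x)"
      using c by (intro tail_sup_ge[OF T t orthant_scaleR[OF x]]) simp
    finally show "normalized_value t x \<le> tail_sup T (c *\<^sub>R x) / c" using c by (simp add: field_simps)
  qed
  then show "c * tail_sup T x \<le> tail_sup T (c *\<^sub>R x)" using c by (simp add: field_simps)
qed

lemma bdd_below_tail_sup: "x \<in> orthant \<Longrightarrow> bdd_below ((\<lambda>T. tail_sup T x) ` {1..})"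
  by (rule bdd_belowI2[of _ "harnack_const * exp (- growth_rate - growth_error) * coord_sum x"])
     (auto intro: tail_sup_ge_coord_sum)

lemma eigenfunction_le: "1 \<le> T \<Longrightarrow> x \<in> orthant \<Longrightarrow> eigenfunction x \<le> tail_sup T x"
  unfolding eigenfunction_def by (rule cINF_lower[OF bdd_below_tail_sup]) auto

lemma eigenfunction_greatest: "(\<And>T. 1 \<le> T \<Longrightarrow> b \<le> tail_sup T x) \<Longrightarrow> b \<le> eigenfunction x"
  unfolding eigenfunction_def by (rule cINF_greatest) auto

lemma eigenfunction_approx:
  assumes x: "x \<in> orthant" and e: "0 < e"
  obtains T where "1 \<le> T" "tail_sup T x < eigenfunction x + e"
  using cINF_less_iff[OF _ bdd_below_tail_sup[OF x], of "eigenfunction x + e"] e that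
  unfolding eigenfunction_def by auto

lemma eigenfunction_ge_coord_sum:
  "x \<in> orthant \<Longrightarrow> harnack_const * exp (- growth_rate - growth_error) * coord_sum x \<le> eigenfunction x"
  by (rule eigenfunction_greatest) (rule tail_sup_ge_coord_sum)

lemma eigenfunction_le_norm:
  assumes x: "x \<in> orthant"
  shows "eigenfunction x \<le> exp growth_error * norm x"
proof -
  have "tail_sup 1 x \<le> exp growth_error * norm x"
    using normalized_value_le[OF _ x] by (intro tail_sup_least) simp
  then show ?thesis using eigenfunction_le[OF _ x, of 1] by simp
qed

lemma eigenfunction_lipschitz:
  assumes x: "x \<in> orthant" and y: "y \<in> orthant"
  shows "eigenfunction x \<le> eigenfunction y + exp growth_error * norm (x - y)"
proof -
  have "eigenfunction x - exp growth_error * norm (x - y) \<le> eigenfunction y"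
  proof (rule eigenfunction_greatest)
    fix T :: real assume T: "1 \<le> T"
    have "eigenfunction x \<le> tail_sup T x" by (rule eigenfunction_le[OF T x])
    also have "\<dots> \<le> tail_sup T y + exp growth_error * norm (x - y)"
      using tail_sup_lipschitz[of T x y] T x y by simp
    finally show "eigenfunction x - exp growth_error * norm (x - y) \<le> tail_sup T y" by simp
  qed
  then show ?thesis by simp
qed

lemma eigenfunction_scaleR:
  assumes x: "x \<in> orthant" and c: "0 < c"
  shows "eigenfunction (c *\<^sub>R x) = c * eigenfunction x"
proof (rule antisym)
  have "eigenfunction (c *\<^sub>R x) / c \<le> eigenfunction x"
  proof (rule eigenfunction_greatest)
    fix T :: real assume T: "1 \<le> T"
    have "eigenfunction (c *\<^sub>R x) \<le> tail_sup T (c *\<^sub>R x)"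
      using c by (intro eigenfunction_le[OF T orthant_scaleR[OF x]]) simp
    then have "eigenfunction (c *\<^sub>R x) \<le> c * tail_sup T x"
      using tail_sup_scaleR[of T x c] T x c by simp
    then show "eigenfunction (c *\<^sub>R x) / c \<le> tail_sup T x" using c by (simp add: field_simps)
  qed
  then show "eigenfunction (c *\<^sub>R x) \<le> c * eigenfunction x" using c by (simp add: field_simps)
  show "c * eigenfunction x \<le> eigenfunction (c *\<^sub>R x)"
  proof (rule eigenfunction_greatest)
    fix T :: real assume T: "1 \<le> T"
    have "c * eigenfunction x \<le> c * tail_sup T x" using eigenfunction_le[OF T x] c by simp
    then show "c * eigenfunction x \<le> tail_sup T (c *\<^sub>R x)" using tail_sup_scaleR[of T x c] T x c by simp
  qed
qed

end

context irreducible_metzler_system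
begin

lemma value_fun_eigenfunction_le:
  assumes s: "0 \<le> s" and x: "x \<in> orthant"
  shows "value_fun eigenfunction Ms s x \<le> exp (growth_rate * s) * eigenfunction x"
proof (rule value_fun_least)
  fix z assume z: "z \<in> reachable Ms s x"
  have "eigenfunction z / exp (growth_rate * s) \<le> eigenfunction x"
  proof (rule eigenfunction_greatest)
    fix T :: real assume T: "1 \<le> T"
    have "tail_sup T z \<le> exp (growth_rate * s) * tail_sup (T + s) x"
    proof (rule tail_sup_least)
      fix t assume t: "T \<le> t"
      have "normalized_value t z \<le> exp (growth_rate * s) * normalized_value (s + t) x"
        using T t by (intro normalized_value_concat[OF s _ x z]) simp
      also have "normalized_value (s + t) x \<le> tail_sup (T + s) x"
        using T t s x by (intro tail_sup_ge) auto
      finally show "normalized_value t z \<le> exp (growth_rate * s) * tail_sup (T + s) x" by simp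
    qed
    also have "tail_sup (T + s) x \<le> tail_sup T x" using T s x by (intro tail_sup_antimono) auto
    finally have "eigenfunction z \<le> exp (growth_rate * s) * tail_sup T x"
      using eigenfunction_le[OF T reachable_nonneg[OF z x s]] by simp
    then show "eigenfunction z / exp (growth_rate * s) \<le> tail_sup T x" by (simp add: field_simps)
  qed
  then show "eigenfunction z \<le> exp (growth_rate * s) * eigenfunction x" by (simp add: field_simps)
qed

text \<open>
  The convergence of the tail suprema to the eigenfunction is uniform on bounded sets, by
  compactness and the uniform Lipschitz bound.
\<close>

lemma tail_sup_uniform_approx:
  assumes e: "0 < e" and \<rho>: "0 \<le> \<rho>"
  obtains T where "1 \<le> T" "\<And>z. z \<in> orthant \<Longrightarrow> norm z \<le> \<rho> \<Longrightarrow> tail_sup T z \<le> eigenfunction z + e"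
proof -
  define L where "L = exp growth_error"
  define \<eta> where "\<eta> = e / (3 * L)"
  have \<eta>: "0 < \<eta>" and L\<eta>: "L * \<eta> = e / 3" unfolding \<eta>_def L_def using e by auto
  let ?K = "cball (0 :: real^'n) \<rho> \<inter> orthant"
  have "compact ?K" by (intro compact_Int_closed compact_cball closed_orthant)
  moreover have "?K \<subseteq> (\<Union>c\<in>?K. ball c \<eta>)" using \<eta> by auto
  ultimately obtain F where F: "F \<subseteq> ?K" "finite F" "?K \<subseteq> (\<Union>c\<in>F. ball c \<eta>)"
    using compactE_image[of ?K ?K "\<lambda>c. ball c \<eta>"] by blast
  have "\<exists>T. 1 \<le> T \<and> tail_sup T c < eigenfunction c + e / 3" if "c \<in> F" for c
  proof -
    have "c \<in> orthant" using that F(1) by auto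
    from eigenfunction_approx[OF this, of "e / 3"] e show ?thesis by auto
  qed
  then obtain T\<^sub>c where T\<^sub>c: "\<And>c. c \<in> F \<Longrightarrow> 1 \<le> T\<^sub>c c \<and> tail_sup (T\<^sub>c c) c < eigenfunction c + e / 3"
    by metis
  define T where "T = Max (insert 1 (T\<^sub>c ` F))"
  have T: "1 \<le> T" "\<And>c. c \<in> F \<Longrightarrow> T\<^sub>c c \<le> T" unfolding T_def using F(2) by auto
  show ?thesis
  proof (rule that[OF T(1)])
    fix z :: "real^'n" assume z: "z \<in> orthant" "norm z \<le> \<rho>"
    then have "z \<in> cball 0 \<rho> \<inter> orthant" by simp
    then obtain c where c: "c \<in> F" "dist c z < \<eta>" using F(3) by auto
    then have c_nonneg: "c \<in> orthant" using F(1) by auto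
    have "tail_sup T z \<le> tail_sup T c + L * norm (z - c)"
      unfolding L_def using T z c_nonneg by (intro tail_sup_lipschitz) auto
    also have "tail_sup T c \<le> tail_sup (T\<^sub>c c) c"
      using T\<^sub>c[OF c(1)] T(2)[OF c(1)] c_nonneg by (intro tail_sup_antimono) auto
    also have "\<dots> \<le> eigenfunction c + e / 3" using T\<^sub>c[OF c(1)] by simp
    also have "eigenfunction c \<le> eigenfunction z + L * norm (c - z)"
      unfolding L_def by (rule eigenfunction_lipschitz[OF c_nonneg z(1)])
    finally have "tail_sup T z \<le> eigenfunction z + e / 3 + L * norm (z - c) + L * norm (c - z)"
      by simp
    moreover have "L * norm (z - c) \<le> L * \<eta>" "L * norm (c - z) \<le> L * \<eta>"
      using c(2) unfolding L_def by (auto simp: dist_norm norm_minus_commute)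
    ultimately show "tail_sup T z \<le> eigenfunction z + e" using L\<eta> by linarith
  qed
qed

lemma value_fun_eigenfunction_ge:
  assumes s: "0 \<le> s" and x: "x \<in> orthant"
  shows "exp (growth_rate * s) * eigenfunction x \<le> value_fun eigenfunction Ms s x"
proof (rule field_le_epsilon)
  fix e :: real assume e: "0 < e"
  let ?V = "value_fun eigenfunction Ms s x"
  obtain T where T: "1 \<le> T"
    "\<And>z. z \<in> orthant \<Longrightarrow> norm z \<le> norm x * exp (R * s) \<Longrightarrow> tail_sup T z \<le> eigenfunction z + e"
    using tail_sup_uniform_approx[OF e, of "norm x * exp (R * s)"] by auto
  have bdd: "bdd_above (eigenfunction ` reachable Ms s x)"
    using eigenfunction_le_norm x s by (intro bdd_above_reachable_image[where C = "exp growth_error"]) auto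
  have "tail_sup (T + s) x \<le> exp (- (growth_rate * s)) * (?V + e)"
  proof (rule tail_sup_least)
    fix t' assume t': "T + s \<le> t'"
    define t where "t = t' - s"
    have t: "0 \<le> t" "T \<le> t" unfolding t_def using t' T by auto
    have "sum_value (s + t) x \<le> exp (growth_rate * t) * (?V + e)"
    proof (rule value_fun_least)
      fix w assume "w \<in> reachable Ms (s + t) x"
      then obtain z where z: "z \<in> reachable Ms s x" "coord_sum w \<le> sum_value t z"
        by (rule sum_value_split_time[OF s t(1) x])
      have z_nonneg: "z \<in> orthant" by (rule reachable_nonneg[OF z(1) x s])
      have "exp (- (growth_rate * t)) * coord_sum w \<le> normalized_value t z"
        unfolding normalized_value_def using z(2) by (intro mult_left_mono) auto
      also have "\<dots> \<le> tail_sup T z" using T t z_nonneg by (intro tail_sup_ge) auto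
      also have "\<dots> \<le> eigenfunction z + e"
        using T(2)[OF z_nonneg norm_reachable_le[OF z(1) s]] .
      also have "\<dots> \<le> ?V + e" using value_fun_upper[OF bdd z(1)] by simp
      finally show "coord_sum w \<le> exp (growth_rate * t) * (?V + e)"
        by (simp add: exp_minus field_simps)
    qed
    then have "normalized_value t' x \<le> exp (- (growth_rate * t')) * (exp (growth_rate * t) * (?V + e))"
      unfolding normalized_value_def t_def by (intro mult_left_mono) auto
    also have "\<dots> = exp (- (growth_rate * s)) * (?V + e)"
      unfolding t_def by (simp add: exp_add[symmetric] algebra_simps)
    finally show "normalized_value t' x \<le> exp (- (growth_rate * s)) * (?V + e)" .
  qed
  then have "exp (growth_rate * s) * tail_sup (T + s) x \<le> ?V + e"
    by (simp add: exp_minus field_simps)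
  moreover have "exp (growth_rate * s) * eigenfunction x \<le> exp (growth_rate * s) * tail_sup (T + s) x"
    using T s x by (intro mult_left_mono eigenfunction_le) auto
  ultimately show "exp (growth_rate * s) * eigenfunction x \<le> ?V + e" by linarith
qed

theorem eigenfunction_properties:
  "homogeneous1 eigenfunction \<and> pos_on_cone eigenfunction \<and>
   (\<exists>L. L-lipschitz_on orthant eigenfunction) \<and>
   (\<forall>t\<ge>0. \<forall>x\<in>orthant. exp (growth_rate * t) * eigenfunction x = value_fun eigenfunction Ms t x)"
proof (intro conjI allI impI ballI exI)
  show "homogeneous1 eigenfunction"
    unfolding homogeneous1_def using eigenfunction_scaleR by blast
  have c: "0 < harnack_const * exp (- growth_rate - growth_error)"
    using harnack_const_pos by simp
  show "pos_on_cone eigenfunction"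
    unfolding pos_on_cone_def
  proof (intro conjI ballI)
    fix x :: "real^'n" assume "x \<in> orthant"
    then show "0 \<le> eigenfunction x"
      using eigenfunction_ge_coord_sum mult_nonneg_nonneg[OF less_imp_le[OF c] coord_sum_nonneg]
      by (meson order.trans)
  next
    fix x :: "real^'n" assume x: "x \<in> orthant0"
    then have "0 < harnack_const * exp (- growth_rate - growth_error) * coord_sum x"
      using mult_pos_pos[OF c coord_sum_pos] by blast
    also have "\<dots> \<le> eigenfunction x"
      using x by (intro eigenfunction_ge_coord_sum) (simp add: orthant0_def)
    finally show "0 < eigenfunction x" .
  qed
  show "(exp growth_error)-lipschitz_on orthant eigenfunction"
  proof (rule lipschitz_onI)
    fix x y :: "real^'n" assume "x \<in> orthant" "y \<in> orthant"
    then show "dist (eigenfunction x) (eigenfunction y) \<le> exp growth_error * dist x y"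
      using eigenfunction_lipschitz[of x y] eigenfunction_lipschitz[of y x]
      by (simp add: dist_norm norm_minus_commute abs_le_iff)
  qed simp
  fix t :: real and x :: "real^'n" assume "0 \<le> t" "x \<in> orthant"
  then show "exp (growth_rate * t) * eigenfunction x = value_fun eigenfunction Ms t x"
    using value_fun_eigenfunction_le value_fun_eigenfunction_ge by (simp add: antisym)
qed

end

section \<open>Identification of \<open>\<lambda>(\<M>)\<close> and the growth of the value function\<close>

text \<open>Positive homogeneous functions are comparable to the coordinate sum, by compactness of the simplex.\<close>

lemma homogeneous_comparable_coord_sum:
  fixes w :: "real^'n \<Rightarrow> real"
  assumes cont: "continuous_on orthant w" and hom: "homogeneous1 w" and pos: "pos_on_cone w"
  obtains c C where "0 < c" "\<And>x. x \<in> orthant \<Longrightarrow> c * coord_sum x \<le> w x \<and> w x \<le> C * coord_sum x"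
proof -
  define D :: "(real^'n) set" where "D = orthant \<inter> coord_sum -` {1}"
  have "isCont coord_sum x" for x :: "real^'n" unfolding coord_sum_def by (intro continuous_intros)
  then have "closed D"
    unfolding D_def by (intro closed_Int closed_orthant continuous_closed_vimage) auto
  moreover have "bounded D"
    unfolding bounded_iff D_def using norm_le_coord_sum by fastforce
  ultimately have "compact D" by (simp add: compact_eq_bounded_closed)
  moreover have "axis undefined 1 \<in> D"
    unfolding D_def orthant_def coord_sum_def axis_def by (simp add: sum.delta)
  moreover have "continuous_on D w" using cont by (rule continuous_on_subset) (simp add: D_def)
  ultimately obtain a b where a: "a \<in> D" "\<And>y. y \<in> D \<Longrightarrow> w a \<le> w y"
    and b: "b \<in> D" "\<And>y. y \<in> D \<Longrightarrow> w y \<le> w b"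
    using continuous_attains_inf[of D w] continuous_attains_sup[of D w] by blast
  have "a \<in> orthant0" using a(1) unfolding D_def orthant0_def by auto
  then have wa: "0 < w a" using pos unfolding pos_on_cone_def by blast
  have "w a * coord_sum x \<le> w x \<and> w x \<le> w b * coord_sum x" if x: "x \<in> orthant" for x
  proof (cases "x = 0")
    case True
    have "w ((2::real) *\<^sub>R 0) = 2 * w 0"
      using hom[unfolded homogeneous1_def, rule_format, OF zero_in_orthant, of 2] by simp
    then show ?thesis using True by simp
  next
    case False
    then have s: "0 < coord_sum x" using x by (intro coord_sum_pos) (simp add: orthant0_def)
    then have xs: "(1 / coord_sum x) *\<^sub>R x \<in> D"
      unfolding D_def using x by (auto simp: coord_sum_scaleR intro: orthant_scaleR)
    have "w x = w (coord_sum x *\<^sub>R ((1 / coord_sum x) *\<^sub>R x))" using s by simp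
    also have "\<dots> = coord_sum x * w ((1 / coord_sum x) *\<^sub>R x)"
      using hom xs s unfolding homogeneous1_def D_def by blast
    finally have "w x = coord_sum x * w ((1 / coord_sum x) *\<^sub>R x)" .
    then show ?thesis using a(2)[OF xs] b(2)[OF xs] s by (simp add: mult.commute)
  qed
  then show ?thesis using that wa by blast
qed

lemma abs_ln_sub_le:
  fixes lo hi u V :: real
  assumes lo: "0 < lo" and lower: "lo * exp u \<le> V" and upper: "V \<le> hi * exp u"
  shows "\<bar>ln V - u\<bar> \<le> \<bar>ln lo\<bar> + \<bar>ln hi\<bar>"
proof -
  have pos: "0 < lo * exp u" using lo by simp
  then have V: "0 < V" using lower by linarith
  then have "0 < hi * exp u" using upper by linarith
  then have hi: "0 < hi" by (simp add: zero_less_mult_iff)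
  have "ln (lo * exp u) \<le> ln V" "ln V \<le> ln (hi * exp u)" using lower upper pos V by simp_all
  then have "ln lo + u \<le> ln V" "ln V \<le> ln hi + u" using lo hi by (simp_all add: ln_mult)
  moreover have "- ln lo \<le> \<bar>ln lo\<bar>" "ln hi \<le> \<bar>ln hi\<bar>" by simp_all
  ultimately show ?thesis unfolding abs_le_iff[of "ln V - u"] by linarith
qed

lemma exp_bounded_imp_nonpos:
  fixes d A :: real
  assumes "\<And>t. 0 \<le> t \<Longrightarrow> exp (d * t) \<le> A"
  shows "d \<le> 0"
proof (rule ccontr)
  assume "\<not> d \<le> 0"
  then have "1 + \<bar>A\<bar> \<le> exp (d * (\<bar>A\<bar> / d))"
    using exp_ge_add_one_self[of "d * (\<bar>A\<bar> / d)"] by simp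
  also have "\<dots> \<le> A" using assms[of "\<bar>A\<bar> / d"] \<open>\<not> d \<le> 0\<close> by simp
  finally show False by linarith
qed

context irreducible_metzler_system
begin

lemma value_fun_comparable:
  assumes t: "0 \<le> t" and x: "x \<in> orthant" and c: "0 < c"
    and w: "\<And>z. z \<in> orthant \<Longrightarrow> c * coord_sum z \<le> w z \<and> w z \<le> C * coord_sum z"
  shows "c * sum_value t x \<le> value_fun w Ms t x" and "value_fun w Ms t x \<le> C * sum_value t x"
proof -
  have "c * coord_sum (one_vec :: real^'n) \<le> C * coord_sum (one_vec :: real^'n)"
    using w[OF one_vec_in_orthant] by linarith
  then have "c \<le> C" by (simp add: coord_sum_one_vec)
  then have C: "0 \<le> C" using c by simp
  show "value_fun w Ms t x \<le> C * sum_value t x"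
  proof (rule value_fun_least)
    fix z assume z: "z \<in> reachable Ms t x"
    then have "w z \<le> C * coord_sum z" using w reachable_nonneg[OF z x t] by blast
    also have "\<dots> \<le> C * sum_value t x" by (intro mult_left_mono sum_value_upper[OF x t z] C)
    finally show "w z \<le> C * sum_value t x" .
  qed
  have "bdd_above (w ` reachable Ms t x)"
  proof (rule bdd_above_reachable_image[OF _ x t])
    fix z :: "real^'n" assume "z \<in> orthant"
    then have "w z \<le> C * coord_sum z" using w by simp
    also have "\<dots> \<le> C * (real CARD('n) * norm z)" using coord_sum_le_norm C by (rule mult_left_mono)
    finally show "w z \<le> C * real CARD('n) * norm z" by (simp add: mult_ac)
  qed (use C in simp)
  have "sum_value t x \<le> value_fun w Ms t x / c"
  proof (rule value_fun_least)
    fix z assume z: "z \<in> reachable Ms t x"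
    then have "c * coord_sum z \<le> value_fun w Ms t x"
      using w reachable_nonneg[OF z x t] value_fun_upper[OF \<open>bdd_above _\<close> z] order.trans by blast
    then show "coord_sum z \<le> value_fun w Ms t x / c" using c by (simp add: field_simps)
  qed
  then show "c * sum_value t x \<le> value_fun w Ms t x" using c by (simp add: field_simps)
qed

lemma eigenvalue_unique:
  assumes hom: "homogeneous1 w" and pos: "pos_on_cone w" and lip: "L-lipschitz_on orthant w"
    and eigen: "\<forall>t\<ge>0. \<forall>x\<in>orthant. exp (l * t) * w x = value_fun w Ms t x"
  shows "l = growth_rate"
proof -
  obtain c C where c: "0 < c" and w: "\<And>x. x \<in> orthant \<Longrightarrow> c * coord_sum x \<le> w x \<and> w x \<le> C * coord_sum x"
    using homogeneous_comparable_coord_sum[OF lipschitz_on_continuous_on[OF lip] hom pos] by blast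
  have "c * coord_sum (one_vec :: real^'n) \<le> C * coord_sum (one_vec :: real^'n)"
    using w[OF one_vec_in_orthant] by linarith
  then have "c \<le> C" by (simp add: coord_sum_one_vec)
  then have C: "0 \<le> C" using c by simp
  have w1: "0 < w one_vec" using pos one_vec_in_orthant0 unfolding pos_on_cone_def by blast
  have eigen_one: "exp (l * t) * w one_vec = value_fun w Ms t one_vec" if "0 \<le> t" for t
    using eigen that one_vec_in_orthant by blast
  have "exp ((l - growth_rate) * t) \<le> C * exp growth_error / w one_vec" if t: "0 \<le> t" for t
  proof -
    have "exp (l * t) * w one_vec \<le> C * growth t"
      using eigen_one[OF t] value_fun_comparable(2)[OF t one_vec_in_orthant c w] unfolding growth_def by simp
    also have "\<dots> \<le> C * exp (growth_rate * t + growth_error)"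
      by (intro mult_left_mono growth_bounds(2)[OF t] C)
    finally show ?thesis
      using w1 by (simp add: field_simps exp_add[symmetric] exp_diff left_diff_distrib)
  qed
  moreover have "exp ((growth_rate - l) * t) \<le> w one_vec / (c * exp (- growth_error))" if t: "0 \<le> t" for t
  proof -
    have "c * exp (growth_rate * t - growth_error) \<le> c * growth t"
      using c by (intro mult_left_mono growth_bounds(1)[OF t]) simp
    also have "\<dots> \<le> exp (l * t) * w one_vec"
      using eigen_one[OF t] value_fun_comparable(1)[OF t one_vec_in_orthant c w] unfolding growth_def by simp
    finally show ?thesis
      using c by (simp add: field_simps exp_add[symmetric] exp_diff left_diff_distrib)
  qed
  ultimately have "l - growth_rate \<le> 0" "growth_rate - l \<le> 0"
    by (blast intro: exp_bounded_imp_nonpos)+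
  then show ?thesis by simp
qed

lemma lambda_M_eq_growth_rate: "lambda_M Ms = growth_rate"
  unfolding lambda_M_def
proof (rule the_equality)
  show "\<exists>w. homogeneous1 w \<and> pos_on_cone w \<and> (\<exists>L. L-lipschitz_on orthant w) \<and>
      (\<forall>t\<ge>0. \<forall>x\<in>orthant. exp (growth_rate * t) * w x = value_fun w Ms t x)"
    using eigenfunction_properties by blast
next
  fix l assume "\<exists>w. homogeneous1 w \<and> pos_on_cone w \<and> (\<exists>L. L-lipschitz_on orthant w) \<and>
      (\<forall>t\<ge>0. \<forall>x\<in>orthant. exp (l * t) * w x = value_fun w Ms t x)"
  then show "l = growth_rate" using eigenvalue_unique by blast
qed

lemma value_fun_exp_bounds:
  assumes t: "1 \<le> t" and y: "y \<in> orthant" and c: "0 < c"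
    and w: "\<And>z. z \<in> orthant \<Longrightarrow> c * coord_sum z \<le> w z \<and> w z \<le> C * coord_sum z"
  shows "c * harnack_const * exp (- growth_rate - growth_error) * coord_sum y * exp (growth_rate * t)
           \<le> value_fun w Ms t y"
    and "value_fun w Ms t y \<le> C * exp growth_error * norm y * exp (growth_rate * t)"
proof -
  have "c * harnack_const * exp (- growth_rate - growth_error) * coord_sum y * exp (growth_rate * t)
      = c * (harnack_const * coord_sum y * exp (growth_rate * (t - 1) - growth_error))"
    by (simp add: exp_add[symmetric] algebra_simps)
  also have "\<dots> \<le> c * sum_value t y"
    using sum_value_ge_exp[OF t y] c by (intro mult_left_mono) auto
  also have "\<dots> \<le> value_fun w Ms t y"
    using value_fun_comparable(1)[OF _ y c w] t by simp
  finally show "c * harnack_const * exp (- growth_rate - growth_error) * coord_sum y * exp (growth_rate * t)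
      \<le> value_fun w Ms t y" .
  have "c * coord_sum (one_vec :: real^'n) \<le> C * coord_sum (one_vec :: real^'n)"
    using w[OF one_vec_in_orthant] by linarith
  then have "c \<le> C" by (simp add: coord_sum_one_vec)
  then have C: "0 \<le> C" using c by simp
  have "value_fun w Ms t y \<le> C * sum_value t y"
    using value_fun_comparable(2)[OF _ y c w] t by simp
  also have "\<dots> \<le> C * (norm y * exp (growth_rate * t + growth_error))"
    using sum_value_le_exp[OF _ y] t C by (intro mult_left_mono) auto
  finally show "value_fun w Ms t y \<le> C * exp growth_error * norm y * exp (growth_rate * t)"
    by (simp add: exp_add mult_ac)
qed

lemma ln_value_fun_bounded:
  assumes cont: "continuous_on orthant v\<^sub>0" and hom: "homogeneous1 v\<^sub>0" and pos: "pos_on_cone v\<^sub>0"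
    and a: "0 < a"
  obtains K where "\<And>t y. 1 \<le> t \<Longrightarrow> y \<in> orthant \<Longrightarrow> a \<le> coord_sum y \<Longrightarrow> norm y \<le> b \<Longrightarrow>
      \<bar>ln (value_fun v\<^sub>0 Ms t y) - growth_rate * t\<bar> \<le> K"
proof -
  obtain c C where c: "0 < c" and v\<^sub>0: "\<And>z. z \<in> orthant \<Longrightarrow> c * coord_sum z \<le> v\<^sub>0 z \<and> v\<^sub>0 z \<le> C * coord_sum z"
    using homogeneous_comparable_coord_sum[OF cont hom pos] by blast
  let ?lo = "c * harnack_const * exp (- growth_rate - growth_error) * a"
  let ?hi = "C * exp growth_error * b"
  have "\<bar>ln (value_fun v\<^sub>0 Ms t y) - growth_rate * t\<bar> \<le> \<bar>ln ?lo\<bar> + \<bar>ln ?hi\<bar>"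
    if t: "1 \<le> t" and y: "y \<in> orthant" "a \<le> coord_sum y" "norm y \<le> b" for t y
  proof (rule abs_ln_sub_le)
    show "0 < ?lo" using c a harnack_const_pos by simp
    have "0 \<le> c * harnack_const * exp (- growth_rate - growth_error)"
      using c harnack_const_pos by simp
    then have "?lo * exp (growth_rate * t)
        \<le> c * harnack_const * exp (- growth_rate - growth_error) * coord_sum y * exp (growth_rate * t)"
      using y(2) by (intro mult_right_mono mult_left_mono) auto
    then show "?lo * exp (growth_rate * t) \<le> value_fun v\<^sub>0 Ms t y"
      using value_fun_exp_bounds(1)[OF t y(1) c v\<^sub>0] by linarith
    have "c * coord_sum (one_vec :: real^'n) \<le> C * coord_sum (one_vec :: real^'n)"
      using v\<^sub>0[OF one_vec_in_orthant] by linarith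
    then have "0 \<le> C * exp growth_error" using c by (simp add: coord_sum_one_vec)
    then have "C * exp growth_error * norm y * exp (growth_rate * t) \<le> ?hi * exp (growth_rate * t)"
      using y(3) by (intro mult_right_mono mult_left_mono) auto
    then show "value_fun v\<^sub>0 Ms t y \<le> ?hi * exp (growth_rate * t)"
      using value_fun_exp_bounds(2)[OF t y(1) c v\<^sub>0] by linarith
  qed
  then show ?thesis by (rule that)
qed

end

lemma uniform_limit_div_at_top:
  fixes g :: "real \<Rightarrow> 'a \<Rightarrow> real"
  assumes bound: "\<And>t y. 1 \<le> t \<Longrightarrow> y \<in> S \<Longrightarrow> \<bar>g t y - \<Lambda> * t\<bar> \<le> K"
  shows "uniform_limit S (\<lambda>t y. g t y / t) (\<lambda>y. \<Lambda>) at_top"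
  unfolding uniform_limit_iff eventually_at_top_linorder
proof (intro allI impI, rule exI)
  fix \<epsilon> :: real assume \<epsilon>: "0 < \<epsilon>"
  show "\<forall>t\<ge>max 1 (K / \<epsilon> + 1). \<forall>y\<in>S. dist (g t y / t) \<Lambda> < \<epsilon>"
  proof (intro allI impI ballI)
    fix t y assume t: "max 1 (K / \<epsilon> + 1) \<le> t" and y: "y \<in> S"
    then have "K < \<epsilon> * t" using \<epsilon> by (simp add: field_simps)
    moreover have "g t y / t - \<Lambda> = (g t y - \<Lambda> * t) / t" using t by (simp add: field_simps)
    ultimately show "dist (g t y / t) \<Lambda> < \<epsilon>"
      using bound[OF _ y, of t] t by (simp add: dist_real_def abs_div field_simps)
  qed
qed

context irreducible_metzler_system
begin

lemma ln_value_fun_rate_locally_uniform: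
  assumes cont: "continuous_on orthant v\<^sub>0" and hom: "homogeneous1 v\<^sub>0" and pos: "pos_on_cone v\<^sub>0"
    and x: "x \<in> orthant0"
  obtains e where "0 < e"
    "uniform_limit (ball x e \<inter> orthant0) (\<lambda>t y. ln (value_fun v\<^sub>0 Ms t y) / t) (\<lambda>y. growth_rate) at_top"
proof -
  let ?N = "real CARD('n)"
  define e where "e = coord_sum x / (2 * ?N)"
  have s: "0 < coord_sum x" by (rule coord_sum_pos[OF x])
  then have e: "0 < e" unfolding e_def by simp
  have near: "coord_sum x / 2 \<le> coord_sum y \<and> norm y \<le> norm x + e" if "y \<in> ball x e" for y
  proof
    have d: "norm (x - y) < e" using that by (simp add: dist_norm)
    have "coord_sum (x - y) \<le> ?N * norm (x - y)" by (rule coord_sum_le_norm)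
    also have "\<dots> \<le> ?N * e" using d by (intro mult_left_mono) auto
    finally show "coord_sum x / 2 \<le> coord_sum y" unfolding e_def by (simp add: coord_sum_diff)
    show "norm y \<le> norm x + e" using norm_triangle_sub[of y x] d by (simp add: norm_minus_commute)
  qed
  obtain K where K: "\<And>t y. 1 \<le> t \<Longrightarrow> y \<in> orthant \<Longrightarrow> coord_sum x / 2 \<le> coord_sum y \<Longrightarrow>
      norm y \<le> norm x + e \<Longrightarrow> \<bar>ln (value_fun v\<^sub>0 Ms t y) - growth_rate * t\<bar> \<le> K"
    using ln_value_fun_bounded[OF cont hom pos, of "coord_sum x / 2" "norm x + e"] s by auto
  have "\<bar>ln (value_fun v\<^sub>0 Ms t y) - growth_rate * t\<bar> \<le> K"
    if "1 \<le> t" "y \<in> ball x e \<inter> orthant0" for t y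
    using that near[of y] by (intro K) (auto simp: orthant0_def)
  then have "uniform_limit (ball x e \<inter> orthant0) (\<lambda>t y. ln (value_fun v\<^sub>0 Ms t y) / t) (\<lambda>y. growth_rate) at_top"
    by (rule uniform_limit_div_at_top)
  with e show ?thesis by (rule that)
qed

end

lemma compact_irreducible_metzler_system:
  fixes Ms :: "(real^'n^'n) set"
  assumes "compact Ms" and "m\<^sub>0 \<in> Ms" and "irreducible_mat m\<^sub>0" and metzler: "\<forall>m\<in>Ms. metzler m"
  obtains R where "irreducible_metzler_system Ms R m\<^sub>0"
proof -
  obtain B where B: "\<And>m. m \<in> Ms \<Longrightarrow> norm m \<le> B" "0 \<le> B"
    using compact_imp_bounded[OF assms(1)] assms(2) unfolding bounded_iff
    by (metis norm_ge_zero order.trans)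
  have entry: "\<bar>m $ i $ j\<bar> \<le> B" if "m \<in> Ms" for m :: "real^'n^'n" and i j
    using component_le_norm_cart[of "m $ i" j] Finite_Cartesian_Product.norm_nth_le[of m i] B(1)[OF that] by linarith
  define R where "R = real CARD('n) * real CARD('n) * B + B"
  have "norm (m *v x) \<le> R * norm x" if m: "m \<in> Ms" for m x
  proof -
    have "norm (m *v x) \<le> onorm ((*v) m) * norm x"
      by (rule onorm[OF matrix_vector_mul_bounded_linear])
    also have "\<dots> \<le> R * norm x"
      using onorm_le_matrix_component[of m B] entry[OF m] B(2)
      unfolding R_def by (intro mult_right_mono) auto
    finally show ?thesis .
  qed
  moreover have "\<bar>m $ i $ j\<bar> \<le> R" if "m \<in> Ms" for m i j
    using entry[OF that] B(2) unfolding R_def by (simp add: add_increasing)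
  ultimately have "irreducible_metzler_system Ms R m\<^sub>0"
    using B(2) assms unfolding R_def by unfold_locales auto
  then show ?thesis by (rule that)
qed

theorem corollary1:
  fixes Ms :: "(real^'n^'n) set" and v0 :: "real^'n \<Rightarrow> real"
  assumes "Ms \<noteq> {}" and "compact Ms" and "convex Ms"
    and "\<forall>m\<in>Ms. metzler m \<and> irreducible_mat m"
    and "continuous_on orthant v0" and "homogeneous1 v0" and "pos_on_cone v0"
  shows "(\<forall>x\<in>orthant0. ((\<lambda>t. ln (value_fun v0 Ms t x) / t) \<longlongrightarrow> lambda_M Ms) at_top)
       \<and> (\<forall>x\<in>orthant0. \<exists>e>0.
            uniform_limit (ball x e \<inter> orthant0)
              (\<lambda>t y. ln (value_fun v0 Ms t y) / t) (\<lambda>y. lambda_M Ms) at_top)"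
proof -
  obtain m\<^sub>0 where "m\<^sub>0 \<in> Ms" using assms(1) by blast
  then obtain R where "irreducible_metzler_system Ms R m\<^sub>0"
    using compact_irreducible_metzler_system[OF assms(2)] assms(4) by blast
  then interpret irreducible_metzler_system Ms R m\<^sub>0 .
  have local_unif: "\<exists>e>0. uniform_limit (ball x e \<inter> orthant0)
      (\<lambda>t y. ln (value_fun v0 Ms t y) / t) (\<lambda>y. lambda_M Ms) at_top" if "x \<in> orthant0" for x
    using ln_value_fun_rate_locally_uniform[OF assms(5-7) that] unfolding lambda_M_eq_growth_rate by blast
  have "((\<lambda>t. ln (value_fun v0 Ms t x) / t) \<longlongrightarrow> lambda_M Ms) at_top" if x: "x \<in> orthant0" for x
  proof -
    obtain e where "0 < e" and lim: "uniform_limit (ball x e \<inter> orthant0)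
        (\<lambda>t y. ln (value_fun v0 Ms t y) / t) (\<lambda>y. lambda_M Ms) at_top"
      using local_unif[OF x] by blast
    then show ?thesis using x by (intro tendsto_uniform_limitI[OF lim]) simp
  qed
  with local_unif show ?thesis by blast
qed
end
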